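(* Suppose $d\ge2$, $\gamma\ge100/101$ and $T\ge45(d-1)^2/(1-\gamma)$. Then for any policy $\pi$ there exists an MDP $M_\theta$ of the family below (with $\delta=1-\gamma$) such that $L_\theta\le100/99$, $L_\varphi\le1+\log(\gamma/(1-\gamma))$, and $\mathbb E[\mathrm{Regret}(M_\theta,\pi,x_0,T)]\ge\frac{\gamma}{3375(1-\gamma)^{3/2}}d\sqrt T-\frac{\gamma}{(1-\gamma)^2}$, where the expectation is over the randomness of $M_\theta$ and $\pi$.
   Context: Family $M_\theta$: two states $x_0,x_1$; actions $\mathcal A=\{-1,1\}^{d-1}$; rewards $r(x_0,a)=0$, $r(x_1,a)=1$. Parameters: $\delta=1-\gamma$, $\Delta=(d-1)/(45\sqrt{(2/5)(T/\delta)\log2})$, $\bar\Delta=\log\frac{(1-\delta)(\delta+\Delta)}{\delta(1-\delta-\Delta)}$, $\alpha=\sqrt{\bar\Delta/((d-1)(1+\bar\Delta))}$, $\beta=\sqrt{1/(1+\bar\Delta)}$. Features: $\varphi(x_0,a,x_0)=(-\alpha a,\beta\log(\delta^{-1}-1))$, $\varphi(x_0,a,x_1)=\varphi(x_1,a,x_0)=(0,0)$, $\varphi(x_1,a,x_1)=(0,\beta\log(\delta^{-1}-1))$. For $\theta\in\{-\bar\Delta/(d-1),\bar\Delta/(d-1)\}^{d-1}$, $\bar\theta=(\theta/\alpha,1/\beta)$ and $p(x_j\mid x_i,a)=\exp(\varphi(x_i,a,x_j)^\top\bar\theta)/\sum_{j'\in\{0,1\}}\exp(\varphi(x_i,a,x_{j'})^\top\bar\theta)$,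 so $p(x_1\mid x_0,a)=1/(1+(\delta^{-1}-1)e^{-a^\top\theta})$, $p(x_0\mid x_1,a)=\delta$. $L_\theta=\|\bar\theta\|_2$, $L_\varphi=\max\|\varphi\|_2$. Discounted criterion with factor $\gamma$: for a (history-dependent) policy $\pi$, $V^\pi_t(s)=\mathbb E[\sum_{i\ge0}\gamma^ir(s_{t+i},a_{t+i})\mid s_t=s]$, $V^*$ the optimal value function, and with $s_1=x_0$, $\mathrm{Regret}(M_\theta,\pi,x_0,T)=\sum_{t=1}^TV^*(s_t)-\sum_{t=1}^TV^\pi_t(s_t)$. *)

theory Defs
  imports "HOL-Probability.Probability"
begin

text \<open>States: False = x0, True = x1. Actions: vectors in {-1,1}^(d-1), represented as
  functions nat => real supported on {0..<d-1}. Vectors in R^d: functions nat => real, only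
  indices < d are relevant.\<close>

type_synonym action = "nat \<Rightarrow> real"
type_synonym state = bool
type_synonym history = "(state \<times> action) list"
type_synonym policy = "history \<Rightarrow> state \<Rightarrow> action pmf"

definition actions :: "nat \<Rightarrow> action set" where
  "actions d = {a. (\<forall>i<d-1. a i \<in> {-1, 1}) \<and> (\<forall>i\<ge>d-1. a i = 0)}"

definition reward :: "state \<Rightarrow> action \<Rightarrow> real" where
  "reward s a = (if s then 1 else 0)"

definition vinner :: "nat \<Rightarrow> (nat \<Rightarrow> real) \<Rightarrow> (nat \<Rightarrow> real) \<Rightarrow> real" where
  "vinner d u v = (\<Sum>i<d. u i * v i)"

definition vnorm :: "nat \<Rightarrow> (nat \<Rightarrow> real) \<Rightarrow> real" where
  "vnorm d u = sqrt (\<Sum>i<d. (u i)\<^sup>2)"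

definition Delta :: "nat \<Rightarrow> real \<Rightarrow> nat \<Rightarrow> real" where
  "Delta d \<gamma> T = (real d - 1) / (45 * sqrt ((2/5) * (real T / (1 - \<gamma>)) * ln 2))"

definition Deltabar :: "nat \<Rightarrow> real \<Rightarrow> nat \<Rightarrow> real" where
  "Deltabar d \<gamma> T = (let \<delta> = 1 - \<gamma>; \<Delta> = Delta d \<gamma> T in
     ln (((1 - \<delta>) * (\<delta> + \<Delta>)) / (\<delta> * (1 - \<delta> - \<Delta>))))"

definition alpha :: "nat \<Rightarrow> real \<Rightarrow> nat \<Rightarrow> real" where
  "alpha d \<gamma> T = sqrt (Deltabar d \<gamma> T / ((real d - 1) * (1 + Deltabar d \<gamma> T)))"

definition beta :: "nat \<Rightarrow> real \<Rightarrow> nat \<Rightarrow> real" where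
  "beta d \<gamma> T = sqrt (1 / (1 + Deltabar d \<gamma> T))"

definition phi :: "nat \<Rightarrow> real \<Rightarrow> nat \<Rightarrow> state \<Rightarrow> action \<Rightarrow> state \<Rightarrow> (nat \<Rightarrow> real)" where
  "phi d \<gamma> T s a s' = (\<lambda>i.
     let \<delta> = 1 - \<gamma>; c = beta d \<gamma> T * ln (1/\<delta> - 1) in
     if \<not> s \<and> \<not> s' then (if i < d - 1 then - alpha d \<gamma> T * a i else if i = d - 1 then c else 0)
     else if s \<and> s' then (if i = d - 1 then c else 0)
     else 0)"

definition Theta :: "nat \<Rightarrow> real \<Rightarrow> nat \<Rightarrow> (nat \<Rightarrow> real) set" where
  "Theta d \<gamma> T = {\<theta>. (\<forall>i<d-1. \<theta> i \<in> {- Deltabar d \<gamma> T / (real d - 1), Deltabar d \<gamma> T / (real d - 1)})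
                      \<and> (\<forall>i\<ge>d-1. \<theta> i = 0)}"

definition thetabar :: "nat \<Rightarrow> real \<Rightarrow> nat \<Rightarrow> (nat \<Rightarrow> real) \<Rightarrow> (nat \<Rightarrow> real)" where
  "thetabar d \<gamma> T \<theta> = (\<lambda>i. if i < d - 1 then \<theta> i / alpha d \<gamma> T
                           else if i = d - 1 then 1 / beta d \<gamma> T else 0)"

text \<open>Transition kernel of M_theta: softmax over the two next states;
  the pmf gives the probability of moving to x1 (True).\<close>
definition trans_M :: "nat \<Rightarrow> real \<Rightarrow> nat \<Rightarrow> (nat \<Rightarrow> real) \<Rightarrow> state \<Rightarrow> action \<Rightarrow> state pmf" where
  "trans_M d \<gamma> T \<theta> s a = bernoulli_pmf
     (exp (vinner d (phi d \<gamma> T s a True) (thetabar d \<gamma> T \<theta>)) /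
      (exp (vinner d (phi d \<gamma> T s a False) (thetabar d \<gamma> T \<theta>))
       + exp (vinner d (phi d \<gamma> T s a True) (thetabar d \<gamma> T \<theta>))))"

definition Ltheta :: "nat \<Rightarrow> real \<Rightarrow> nat \<Rightarrow> (nat \<Rightarrow> real) \<Rightarrow> real" where
  "Ltheta d \<gamma> T \<theta> = vnorm d (thetabar d \<gamma> T \<theta>)"

definition Lphi :: "nat \<Rightarrow> real \<Rightarrow> nat \<Rightarrow> real" where
  "Lphi d \<gamma> T = Max ((\<lambda>(s, a, s'). vnorm d (phi d \<gamma> T s a s')) ` (UNIV \<times> actions d \<times> UNIV))"

definition valid_policy :: "nat \<Rightarrow> policy \<Rightarrow> bool" where
  "valid_policy d \<pi> \<longleftrightarrow> (\<forall>h s. set_pmf (\<pi> h s) \<subseteq> actions d)"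

primrec traj :: "policy \<Rightarrow> (state \<Rightarrow> action \<Rightarrow> state pmf) \<Rightarrow> nat \<Rightarrow> history \<Rightarrow> state
                  \<Rightarrow> history pmf" where
  "traj \<pi> K 0 h s = return_pmf []"
| "traj \<pi> K (Suc n) h s =
     bind_pmf (\<pi> h s) (\<lambda>a. bind_pmf (K s a) (\<lambda>s'.
       map_pmf (\<lambda>rest. (s, a) # rest) (traj \<pi> K n (h @ [(s, a)]) s')))"

definition Vpi :: "policy \<Rightarrow> (state \<Rightarrow> action \<Rightarrow> state pmf) \<Rightarrow> real \<Rightarrow> history \<Rightarrow> state \<Rightarrow> real" where
  "Vpi \<pi> K \<gamma> h s = lim (\<lambda>N. measure_pmf.expectation (traj \<pi> K N h s)
       (\<lambda>\<tau>. \<Sum>i<N. \<gamma> ^ i * reward (fst (\<tau> ! i)) (snd (\<tau> ! i))))"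

definition Vstar :: "nat \<Rightarrow> (state \<Rightarrow> action \<Rightarrow> state pmf) \<Rightarrow> real \<Rightarrow> state \<Rightarrow> real" where
  "Vstar d K \<gamma> s = (SUP \<pi>\<in>{\<pi>. valid_policy d \<pi>}. Vpi \<pi> K \<gamma> [] s)"

text \<open>Expected regret over T steps starting from s_1 = x0; index t (0-based) is time t+1,
  and V^pi_t(s_t) is the value conditional on the history up to time t.\<close>
definition expected_regret :: "nat \<Rightarrow> (state \<Rightarrow> action \<Rightarrow> state pmf) \<Rightarrow> real \<Rightarrow> policy \<Rightarrow> state \<Rightarrow> nat \<Rightarrow> real" where
  "expected_regret d K \<gamma> \<pi> x0 T = measure_pmf.expectation (traj \<pi> K T [] x0)
     (\<lambda>\<tau>. (\<Sum>t<T. Vstar d K \<gamma> (fst (\<tau> ! t))) - (\<Sum>t<T. Vpi \<pi> K \<gamma> (take t \<tau>) (fst (\<tau> ! t))))"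

end

theory Submission
  imports Defs
begin

(*
  From x1 every instance returns to x0 with probability delta, whatever the action; from x0 it
  moves to x1 with probability p01 <a, theta>, which is largest, namely delta + Delta, for the
  action a = sign theta.  The value of the stationary policy playing sign theta is superharmonic
  for every action, hence it is V*, and the performance-difference argument bounds the regret
  from below by the Bellman gaps along the trajectory, weighted by 1 + gamma + ... + gamma^t,
  i.e. roughly by 1/delta.  In x0 the gap is proportional to the number of coordinates in which
  the action disagrees with sign theta, and the chain spends about half of the time in x0.

  Flipping coordinate i of theta moves every transition probability by a relative amount of
  order 1/sqrt(T delta), so the chi-square divergence between the two trajectory laws over T
  steps stays below 1/16.  The policy therefore cannot match the sign of theta_i in both
  instances most of the time: the expected numbers of disagreements add up to at least T/5.
  Summing over i and averaging over the hypercube yields an instance whose expected regret is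
  of order gamma d sqrt T / delta^(3/2), minus the gamma/delta^2 lost to the finite horizon.
*)

type_synonym kernel = "state \<Rightarrow> action \<Rightarrow> state pmf"

abbreviation E :: "'a pmf \<Rightarrow> ('a \<Rightarrow> real) \<Rightarrow> real" where
  "E p f \<equiv> measure_pmf.expectation p f"

section \<open>Trajectories and expectations\<close>

lemma finite_actions: "finite (actions d)"
proof -
  let ?ext = "\<lambda>f i. if i < d - 1 then f i else 0"
  have "actions d \<subseteq> ?ext ` (PiE {..<d-1} (\<lambda>_. {-1,1::real}))"
  proof
    fix a assume a: "a \<in> actions d"
    show "a \<in> ?ext ` (PiE {..<d-1} (\<lambda>_. {-1,1::real}))"
    proof
      show "restrict a {..<d-1} \<in> PiE {..<d-1} (\<lambda>_. {-1,1::real})"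
        using a by (auto simp: actions_def)
      show "a = ?ext (restrict a {..<d-1})"
        using a by (auto simp: actions_def fun_eq_iff)
    qed
  qed
  then show ?thesis by (rule finite_subset) (intro finite_imageI finite_PiE, auto)
qed

lemma finite_set_pmf_policy: "valid_policy d \<pi> \<Longrightarrow> finite (set_pmf (\<pi> h s))"
  using finite_actions finite_subset unfolding valid_policy_def by blast

lemma finite_set_pmf_traj:
  assumes "valid_policy d \<pi>"
  shows "finite (set_pmf (traj \<pi> K n h s))"
  by (induction n arbitrary: h s) (auto simp: set_bind_pmf finite_set_pmf_policy[OF assms])

lemma integrable_traj:
  "valid_policy d \<pi> \<Longrightarrow> integrable (measure_pmf (traj \<pi> K n h s)) (f :: _ \<Rightarrow> real)"
  by (rule integrable_measure_pmf_finite[OF finite_set_pmf_traj])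

lemma integrable_policy:
  "valid_policy d \<pi> \<Longrightarrow> integrable (measure_pmf (\<pi> h s)) (f :: _ \<Rightarrow> real)"
  by (rule integrable_measure_pmf_finite[OF finite_set_pmf_policy])

lemma integrable_bool_pmf [simp]: "integrable (measure_pmf (q :: bool pmf)) (f :: _ \<Rightarrow> real)"
  by (rule integrable_measure_pmf_finite) simp

lemma expectation_bind_pmf_finite:
  assumes "finite (set_pmf p)" "\<And>x. x \<in> set_pmf p \<Longrightarrow> finite (set_pmf (f x))"
  shows "E (bind_pmf p f) g = E p (\<lambda>x. E (f x) g)"
proof -
  have "E (bind_pmf p f) g = (\<Sum>a\<in>set_pmf p. pmf p a *\<^sub>R E (f a) g)"
    using assms by (intro pmf_expectation_bind) auto
  also have "\<dots> = E p (\<lambda>x. E (f x) g)"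
    using assms by (subst integral_measure_pmf[of "set_pmf p"]) auto
  finally show ?thesis .
qed

lemma expectation_traj_Suc:
  assumes v: "valid_policy d \<pi>"
  shows "E (traj \<pi> K (Suc n) h s) f =
    E (\<pi> h s) (\<lambda>a. E (K s a) (\<lambda>s'. E (traj \<pi> K n (h@[(s,a)]) s') (\<lambda>r. f ((s,a)#r))))"
proof -
  have "E (traj \<pi> K (Suc n) h s) f =
    E (\<pi> h s) (\<lambda>a. E (K s a \<bind> (\<lambda>s'. map_pmf ((#) (s, a)) (traj \<pi> K n (h @ [(s, a)]) s'))) f)"
    using finite_set_pmf_policy[OF v] finite_set_pmf_traj[OF v]
    by (simp only: traj.simps, subst expectation_bind_pmf_finite) (auto simp: set_bind_pmf)
  also have "\<dots> = E (\<pi> h s) (\<lambda>a. E (K s a) (\<lambda>s'. E (traj \<pi> K n (h@[(s,a)]) s') (\<lambda>r. f ((s,a)#r))))"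
    using finite_set_pmf_traj[OF v] by (subst expectation_bind_pmf_finite) auto
  finally show ?thesis .
qed

lemma set_pmf_traj_D:
  assumes "valid_policy d \<pi>" "\<tau> \<in> set_pmf (traj \<pi> K n h s)"
  shows "length \<tau> = n \<and> (\<forall>u<n. snd (\<tau>!u) \<in> actions d) \<and> (n > 0 \<longrightarrow> fst (\<tau>!0) = s)"
  using assms(2)
proof (induction n arbitrary: h s \<tau>)
  case 0 then show ?case by simp
next
  case (Suc n)
  then obtain a s' r where a: "a \<in> set_pmf (\<pi> h s)"
    and r: "r \<in> set_pmf (traj \<pi> K n (h@[(s,a)]) s')" and \<tau>: "\<tau> = (s,a)#r"
    by (auto simp: set_bind_pmf)
  have "a \<in> actions d" using a assms(1) by (auto simp: valid_policy_def)
  with Suc.IH[OF r] \<tau> show ?case by (auto simp: nth_Cons split: nat.splits)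
qed

lemma expectation_affine:
  "integrable (measure_pmf p) f \<Longrightarrow> E p (\<lambda>x. c + k * f x) = c + k * E p f"
  by (simp add: integral_add integral_mult_right)

lemma expectation_policy_mono:
  assumes v: "valid_policy d \<pi>" and "\<And>a. a \<in> actions d \<Longrightarrow> f a \<le> g a"
  shows "E (\<pi> h s) f \<le> E (\<pi> h s) g"
  using assms
  by (intro integral_mono_AE integrable_policy[OF v])
     (auto simp: AE_measure_pmf_iff valid_policy_def)

lemma expectation_policy_le_const:
  assumes "valid_policy d \<pi>" and "\<And>a. a \<in> actions d \<Longrightarrow> f a \<le> c"
  shows "E (\<pi> h s) f \<le> c"
  using expectation_policy_mono[OF assms(1), of f "\<lambda>_. c"] assms(2) by simp

lemma expectation_policy_ge_const:
  assumes "valid_policy d \<pi>" and "\<And>a. a \<in> actions d \<Longrightarrow> c \<le> f a"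
  shows "c \<le> E (\<pi> h s) f"
  using expectation_policy_mono[OF assms(1), of "\<lambda>_. c" f] assms(2) by simp

lemma expectation_bool_mono:
  "(\<And>s. f s \<le> g s) \<Longrightarrow> E (q :: bool pmf) f \<le> E q g"
  by (rule integral_mono) auto

lemma expectation_bool: "E (q :: bool pmf) f = pmf q True * f True + pmf q False * f False"
  by (subst integral_measure_pmf[of UNIV]) (auto simp: UNIV_bool)

section \<open>Discounted returns and values\<close>

definition disc_return ::
    "policy \<Rightarrow> kernel \<Rightarrow> real \<Rightarrow> (state \<Rightarrow> action \<Rightarrow> real) \<Rightarrow> nat \<Rightarrow> history \<Rightarrow> state \<Rightarrow> real" where
  "disc_return \<pi> K \<gamma> f n h s =
     E (traj \<pi> K n h s) (\<lambda>\<tau>. \<Sum>u<n. \<gamma> ^ u * f (fst (\<tau> ! u)) (snd (\<tau> ! u)))"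

lemma Vpi_eq_lim_disc_return: "Vpi \<pi> K \<gamma> h s = lim (\<lambda>N. disc_return \<pi> K \<gamma> reward N h s)"
  by (simp add: Vpi_def disc_return_def)

lemma reward_eq_of_bool: "reward s a = of_bool s"
  by (simp add: reward_def)

lemma disc_sum_Cons:
  fixes f :: "state \<Rightarrow> action \<Rightarrow> real" and \<gamma> :: real
  shows "(\<Sum>u<Suc n. \<gamma> ^ u * f (fst (((s,a)#r) ! u)) (snd (((s,a)#r) ! u)))
   = f s a + \<gamma> * (\<Sum>u<n. \<gamma> ^ u * f (fst (r ! u)) (snd (r ! u)))"
proof -
  have "(\<Sum>u<Suc n. \<gamma> ^ u * f (fst (((s,a)#r) ! u)) (snd (((s,a)#r) ! u)))
     = f s a + (\<Sum>u<n. \<gamma> ^ Suc u * f (fst (r ! u)) (snd (r ! u)))"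
    by (simp only: sum.lessThan_Suc_shift) simp
  then show ?thesis by (simp add: sum_distrib_left mult.assoc)
qed

lemma disc_return_0 [simp]: "disc_return \<pi> K \<gamma> f 0 h s = 0"
  by (simp add: disc_return_def)

lemma disc_return_Suc:
  assumes v: "valid_policy d \<pi>"
  shows "disc_return \<pi> K \<gamma> f (Suc n) h s =
    E (\<pi> h s) (\<lambda>a. f s a + \<gamma> * E (K s a) (\<lambda>s'. disc_return \<pi> K \<gamma> f n (h@[(s,a)]) s'))"
  unfolding disc_return_def expectation_traj_Suc[OF v] disc_sum_Cons
  by (simp add: expectation_affine integrable_traj[OF v])

lemma disc_return_reward_Suc:
  assumes v: "valid_policy d \<pi>"
  shows "disc_return \<pi> K \<gamma> reward (Suc n) h s =
    of_bool s + \<gamma> * E (\<pi> h s) (\<lambda>a. E (K s a) (\<lambda>s'. disc_return \<pi> K \<gamma> reward n (h@[(s,a)]) s'))"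
  unfolding disc_return_Suc[OF v] reward_eq_of_bool
  by (rule expectation_affine[OF integrable_policy[OF v]])

lemma disc_return_nonneg:
  "(\<And>s a. 0 \<le> f s a) \<Longrightarrow> 0 \<le> \<gamma> \<Longrightarrow> 0 \<le> disc_return \<pi> K \<gamma> f n h s"
  unfolding disc_return_def by (intro integral_nonneg_AE AE_I2 sum_nonneg mult_nonneg_nonneg) auto

lemma disc_return_le:
  assumes v: "valid_policy d \<pi>"
    and step: "\<And>h s. E (\<pi> h s) (\<lambda>a. f s a + \<gamma> * E (K s a) (\<lambda>s'. D (h@[(s,a)]) s')) \<le> D h s"
    and D_nonneg: "\<And>h s. 0 \<le> D h s" and \<gamma>: "0 \<le> \<gamma>"
  shows "disc_return \<pi> K \<gamma> f n h s \<le> D h s"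
proof (induction n arbitrary: h s)
  case 0 then show ?case using D_nonneg by simp
next
  case (Suc n)
  have "disc_return \<pi> K \<gamma> f (Suc n) h s
        \<le> E (\<pi> h s) (\<lambda>a. f s a + \<gamma> * E (K s a) (\<lambda>s'. D (h@[(s,a)]) s'))"
    unfolding disc_return_Suc[OF v] using \<gamma>
    by (intro integral_mono add_left_mono mult_left_mono expectation_bool_mono Suc.IH
        integrable_policy[OF v]) auto
  also have "\<dots> \<le> D h s" by (rule step)
  finally show ?case .
qed

lemma disc_return_le_Suc:
  assumes v: "valid_policy d \<pi>" and f: "\<And>s a. 0 \<le> f s a" and \<gamma>: "0 \<le> \<gamma>"
  shows "disc_return \<pi> K \<gamma> f n h s \<le> disc_return \<pi> K \<gamma> f (Suc n) h s"
proof (induction n arbitrary: h s)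
  case 0 then show ?case using disc_return_nonneg[OF f \<gamma>] by simp
next
  case (Suc n)
  have "disc_return \<pi> K \<gamma> f (Suc n) h s
        = E (\<pi> h s) (\<lambda>a. f s a + \<gamma> * E (K s a) (\<lambda>s'. disc_return \<pi> K \<gamma> f n (h@[(s,a)]) s'))"
    by (rule disc_return_Suc[OF v])
  also have "\<dots> \<le> E (\<pi> h s)
      (\<lambda>a. f s a + \<gamma> * E (K s a) (\<lambda>s'. disc_return \<pi> K \<gamma> f (Suc n) (h@[(s,a)]) s'))"
    using \<gamma> by (intro integral_mono add_left_mono mult_left_mono expectation_bool_mono Suc.IH
        integrable_policy[OF v]) auto
  also have "\<dots> = disc_return \<pi> K \<gamma> f (Suc (Suc n)) h s"
    by (rule disc_return_Suc[OF v, symmetric])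
  finally show ?case .
qed

definition superharmonic :: "nat \<Rightarrow> kernel \<Rightarrow> real \<Rightarrow> (state \<Rightarrow> real) \<Rightarrow> bool" where
  "superharmonic d K \<gamma> W \<longleftrightarrow>
     (\<forall>s. 0 \<le> W s) \<and> (\<forall>s a. a \<in> actions d \<longrightarrow> of_bool s + \<gamma> * E (K s a) W \<le> W s)"

context
  fixes d :: nat and \<pi> :: policy and K :: kernel and \<gamma> :: real and W :: "state \<Rightarrow> real"
  assumes v: "valid_policy d \<pi>" and W: "superharmonic d K \<gamma> W" and \<gamma>: "0 \<le> \<gamma>"
begin

lemma disc_return_reward_le_superharmonic: "disc_return \<pi> K \<gamma> reward n h s \<le> W s"
proof (rule disc_return_le[OF v _ _ \<gamma>])
  fix h s
  show "E (\<pi> h s) (\<lambda>a. reward s a + \<gamma> * E (K s a) (\<lambda>s'. W s')) \<le> W s"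
    using W by (intro expectation_policy_le_const[OF v]) (simp add: superharmonic_def reward_eq_of_bool)
qed (use W in \<open>simp add: superharmonic_def\<close>)

lemma incseq_disc_return_reward: "incseq (\<lambda>N. disc_return \<pi> K \<gamma> reward N h s)"
  by (intro incseq_SucI disc_return_le_Suc[OF v _ \<gamma>]) (simp add: reward_def)

lemma disc_return_reward_LIMSEQ: "(\<lambda>N. disc_return \<pi> K \<gamma> reward N h s) \<longlonglongrightarrow> Vpi \<pi> K \<gamma> h s"
proof -
  obtain L where "(\<lambda>N. disc_return \<pi> K \<gamma> reward N h s) \<longlonglongrightarrow> L"
    using incseq_disc_return_reward disc_return_reward_le_superharmonic by (metis incseq_convergent)
  then show ?thesis unfolding Vpi_eq_lim_disc_return by (metis limI)
qed

lemma disc_return_reward_le_Vpi: "disc_return \<pi> K \<gamma> reward N h s \<le> Vpi \<pi> K \<gamma> h s"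
  by (rule incseq_le[OF incseq_disc_return_reward disc_return_reward_LIMSEQ])

lemma Vpi_le_superharmonic: "Vpi \<pi> K \<gamma> h s \<le> W s"
  by (rule LIMSEQ_le_const2[OF disc_return_reward_LIMSEQ])
     (use disc_return_reward_le_superharmonic in auto)

lemma Vpi_le_Bellman:
  "Vpi \<pi> K \<gamma> h s \<le> of_bool s + \<gamma> * E (\<pi> h s) (\<lambda>a. E (K s a) (\<lambda>s'. Vpi \<pi> K \<gamma> (h@[(s,a)]) s'))"
proof (rule LIMSEQ_le_const2[OF LIMSEQ_Suc[OF disc_return_reward_LIMSEQ]])
  show "\<exists>N. \<forall>n\<ge>N. disc_return \<pi> K \<gamma> reward (Suc n) h s
          \<le> of_bool s + \<gamma> * E (\<pi> h s) (\<lambda>a. E (K s a) (\<lambda>s'. Vpi \<pi> K \<gamma> (h@[(s,a)]) s'))"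
    unfolding disc_return_reward_Suc[OF v] using \<gamma>
    by (intro exI[of _ 0] allI impI add_left_mono mult_left_mono expectation_bool_mono
        expectation_policy_mono[OF v] disc_return_reward_le_Vpi) auto
qed

text \<open>One step of the performance-difference argument.\<close>
lemma deficit_step:
  "E (\<pi> h s) (\<lambda>a. (W s - of_bool s - \<gamma> * E (K s a) W)
      + \<gamma> * E (K s a) (\<lambda>s'. W s' - Vpi \<pi> K \<gamma> (h@[(s,a)]) s'))
   \<le> W s - Vpi \<pi> K \<gamma> h s"
proof -
  have "\<And>a. (W s - of_bool s - \<gamma> * E (K s a) W)
           + \<gamma> * E (K s a) (\<lambda>s'. W s' - Vpi \<pi> K \<gamma> (h@[(s,a)]) s')
        = (W s - of_bool s) + (- \<gamma>) * E (K s a) (\<lambda>s'. Vpi \<pi> K \<gamma> (h@[(s,a)]) s')"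
    by (simp add: Bochner_Integration.integral_diff algebra_simps)
  then have "E (\<pi> h s) (\<lambda>a. (W s - of_bool s - \<gamma> * E (K s a) W)
               + \<gamma> * E (K s a) (\<lambda>s'. W s' - Vpi \<pi> K \<gamma> (h@[(s,a)]) s'))
     = (W s - of_bool s) + (- \<gamma>) * E (\<pi> h s) (\<lambda>a. E (K s a) (\<lambda>s'. Vpi \<pi> K \<gamma> (h@[(s,a)]) s'))"
    by (simp only: expectation_affine[OF integrable_policy[OF v]])
  also have "\<dots> \<le> W s - Vpi \<pi> K \<gamma> h s"
    using Vpi_le_Bellman[of h s] by simp
  finally show ?thesis .
qed

end

lemma disc_return_stationary_ge:
  assumes v: "valid_policy d \<pi>" and stationary: "\<And>h s. \<pi> h s = return_pmf (opt s)"
    and W_eq: "\<And>s. W s = of_bool s + \<gamma> * E (K s (opt s)) W"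
    and W_le: "\<And>s. W s \<le> B" and \<gamma>: "0 \<le> \<gamma>"
  shows "W s - \<gamma> ^ N * B \<le> disc_return \<pi> K \<gamma> reward N h s"
proof (induction N arbitrary: h s)
  case 0 then show ?case using W_le by simp
next
  case (Suc N)
  have "W s - \<gamma> ^ Suc N * B = of_bool s + \<gamma> * E (K s (opt s)) (\<lambda>s'. W s' - \<gamma> ^ N * B)"
    using W_eq[of s] by (simp add: Bochner_Integration.integral_diff algebra_simps)
  also have "\<dots> \<le> of_bool s + \<gamma> * E (K s (opt s))
                    (\<lambda>s'. disc_return \<pi> K \<gamma> reward N (h@[(s, opt s)]) s')"
    using \<gamma> by (intro add_left_mono mult_left_mono expectation_bool_mono Suc.IH) auto
  also have "\<dots> = disc_return \<pi> K \<gamma> reward (Suc N) h s"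
    unfolding disc_return_reward_Suc[OF v] stationary by simp
  finally show ?case .
qed

lemma Vstar_eq_superharmonic:
  assumes W: "superharmonic d K \<gamma> W" and a_opt: "\<And>s. opt s \<in> actions d"
    and W_eq: "\<And>s. W s = of_bool s + \<gamma> * E (K s (opt s)) W"
    and W_le: "\<And>s. W s \<le> B" and \<gamma>: "0 \<le> \<gamma>" "\<gamma> < 1"
  shows "Vstar d K \<gamma> s = W s"
proof -
  define \<pi>\<^sub>o\<^sub>p\<^sub>t :: policy where "\<pi>\<^sub>o\<^sub>p\<^sub>t = (\<lambda>h s. return_pmf (opt s))"
  have v: "valid_policy d \<pi>\<^sub>o\<^sub>p\<^sub>t" using a_opt by (simp add: valid_policy_def \<pi>\<^sub>o\<^sub>p\<^sub>t_def)
  have stationary: "\<And>h s. \<pi>\<^sub>o\<^sub>p\<^sub>t h s = return_pmf (opt s)" by (simp add: \<pi>\<^sub>o\<^sub>p\<^sub>t_def)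
  have le: "Vpi \<pi> K \<gamma> [] s \<le> W s" if "\<pi> \<in> {\<pi>. valid_policy d \<pi>}" for \<pi>
    using Vpi_le_superharmonic[OF _ W \<gamma>(1)] that by blast
  have "(\<lambda>N. W s - \<gamma> ^ N * B) \<longlonglongrightarrow> W s - 0 * B"
    by (intro tendsto_intros LIMSEQ_realpow_zero \<gamma>)
  then have "W s \<le> Vpi \<pi>\<^sub>o\<^sub>p\<^sub>t K \<gamma> [] s"
    using disc_return_stationary_ge[where opt = opt and K = K, OF v stationary W_eq W_le \<gamma>(1)]
    by (intro LIMSEQ_le[OF _ disc_return_reward_LIMSEQ[OF v W \<gamma>(1)]]) auto
  then have "W s \<le> Vstar d K \<gamma> s"
    unfolding Vstar_def using v le by (intro cSUP_upper2[of _ _ \<pi>\<^sub>o\<^sub>p\<^sub>t] bdd_aboveI2) auto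
  moreover have "Vstar d K \<gamma> s \<le> W s"
    unfolding Vstar_def using v le by (intro cSUP_least) auto
  ultimately show ?thesis by simp
qed

text \<open>Induction with the potential \<open>B\<close> on \<open>x\<^sub>1\<close>: a step in \<open>x\<^sub>0\<close> earns \<open>1\<close> and enters \<open>x\<^sub>1\<close>
  with probability at most \<open>p\<close>, a step in \<open>x\<^sub>1\<close> returns with probability at least \<open>q\<close>.\<close>
lemma disc_return_visits_x0_ge:
  assumes v: "valid_policy d \<pi>"
    and to_x1: "\<And>a. a \<in> actions d \<Longrightarrow> pmf (K False a) True \<le> p"
    and to_x0: "\<And>a. a \<in> actions d \<Longrightarrow> q \<le> pmf (K True a) False"
    and c: "0 \<le> c" "p * B \<le> 1 - c" "c \<le> q * B" "0 \<le> B"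
  shows "c * n - (if s then B else 0) \<le> disc_return \<pi> K 1 (\<lambda>s a. if s then 0 else 1) n h s"
proof (induction n arbitrary: h s)
  case 0 then show ?case using c by (simp add: disc_return_def)
next
  case (Suc n)
  let ?f = "\<lambda>(s::state) (a::action). if s then 0 else (1::real)"
  have "c * Suc n - (if s then B else 0)
        \<le> E (\<pi> h s) (\<lambda>a. ?f s a + 1 * E (K s a) (\<lambda>s'. c * n - (if s' then B else 0)))"
  proof (rule expectation_policy_ge_const[OF v])
    fix a assume a: "a \<in> actions d"
    have e: "E (K s a) (\<lambda>s'. c * n - (if s' then B else 0)) = c * n - B * pmf (K s a) True"
      by (simp add: expectation_bool pmf_False_conv_True algebra_simps)
    show "c * Suc n - (if s then B else 0)
          \<le> ?f s a + 1 * E (K s a) (\<lambda>s'. c * n - (if s' then B else 0))"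
    proof (cases s)
      case True
      have "B * pmf (K True a) True \<le> B * (1 - q)"
        using to_x0[OF a] c by (intro mult_left_mono) (auto simp: pmf_False_conv_True)
      then show ?thesis using True e c by (simp add: algebra_simps)
    next
      case False
      have "B * pmf (K False a) True \<le> B * p"
        using to_x1[OF a] c by (intro mult_left_mono) auto
      then show ?thesis using False e c by (simp add: algebra_simps)
    qed
  qed
  also have "\<dots> \<le> disc_return \<pi> K 1 ?f (Suc n) h s"
    unfolding disc_return_Suc[OF v]
    by (intro expectation_policy_mono[OF v] add_left_mono mult_left_mono expectation_bool_mono Suc.IH) auto
  finally show ?case .
qed

section \<open>Regret as a weighted sum of Bellman gaps\<close>

definition disc_weight :: "real \<Rightarrow> nat \<Rightarrow> real" where
  "disc_weight \<gamma> u = (\<Sum>j\<le>u. \<gamma> ^ j)"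

definition hist_sum :: "policy \<Rightarrow> kernel \<Rightarrow> (history \<Rightarrow> state \<Rightarrow> real) \<Rightarrow> nat \<Rightarrow> history \<Rightarrow> state \<Rightarrow> real" where
  "hist_sum \<pi> K D n h s = E (traj \<pi> K n h s) (\<lambda>\<tau>. \<Sum>t<n. D (h @ take t \<tau>) (fst (\<tau> ! t)))"

definition weighted_return ::
    "policy \<Rightarrow> kernel \<Rightarrow> real \<Rightarrow> (state \<Rightarrow> action \<Rightarrow> real) \<Rightarrow> nat \<Rightarrow> history \<Rightarrow> state \<Rightarrow> real" where
  "weighted_return \<pi> K \<gamma> f n h s =
     E (traj \<pi> K n h s) (\<lambda>\<tau>. \<Sum>u<n. disc_weight \<gamma> u * f (fst (\<tau> ! u)) (snd (\<tau> ! u)))"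

lemma weighted_sum_Cons:
  fixes f :: "state \<Rightarrow> action \<Rightarrow> real" and \<gamma> :: real
  shows "(\<Sum>u<Suc n. disc_weight \<gamma> u * f (fst (((s,a)#r) ! u)) (snd (((s,a)#r) ! u)))
   = f s a + \<gamma> * (\<Sum>u<n. \<gamma> ^ u * f (fst (r ! u)) (snd (r ! u)))
     + (\<Sum>u<n. disc_weight \<gamma> u * f (fst (r ! u)) (snd (r ! u)))"
proof -
  have "(\<Sum>u<Suc n. disc_weight \<gamma> u * f (fst (((s,a)#r) ! u)) (snd (((s,a)#r) ! u)))
     = f s a + (\<Sum>u<n. (\<gamma> ^ Suc u + disc_weight \<gamma> u) * f (fst (r ! u)) (snd (r ! u)))"
    by (simp only: sum.lessThan_Suc_shift) (simp add: disc_weight_def add.commute)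
  then show ?thesis
    by (simp add: sum_distrib_left mult.assoc distrib_right sum.distrib)
qed

context
  fixes d :: nat and \<pi> :: policy and K :: kernel and \<gamma> :: real
  assumes v: "valid_policy d \<pi>"
begin

lemma hist_sum_Suc:
  "hist_sum \<pi> K D (Suc n) h s = D h s + E (\<pi> h s) (\<lambda>a. E (K s a) (\<lambda>s'. hist_sum \<pi> K D n (h@[(s,a)]) s'))"
proof -
  have "\<And>a r. (\<Sum>t<Suc n. D (h @ take t ((s,a)#r)) (fst (((s,a)#r) ! t)))
          = D h s + (\<Sum>t<n. D ((h@[(s,a)]) @ take t r) (fst (r ! t)))"
    by (simp only: sum.lessThan_Suc_shift) simp
  then show ?thesis
    unfolding hist_sum_def expectation_traj_Suc[OF v]
    by (simp add: Bochner_Integration.integral_add integrable_traj[OF v] integrable_policy[OF v])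
qed

lemma weighted_return_Suc:
  "weighted_return \<pi> K \<gamma> f (Suc n) h s = disc_return \<pi> K \<gamma> f (Suc n) h s
     + E (\<pi> h s) (\<lambda>a. E (K s a) (\<lambda>s'. weighted_return \<pi> K \<gamma> f n (h@[(s,a)]) s'))"
  unfolding weighted_return_def disc_return_Suc[OF v] expectation_traj_Suc[OF v] weighted_sum_Cons
  unfolding disc_return_def
  by (simp add: Bochner_Integration.integral_add integral_mult_right integrable_traj[OF v]
      integrable_policy[OF v])

lemma weighted_return_le_hist_sum:
  assumes step: "\<And>h s. E (\<pi> h s) (\<lambda>a. f s a + \<gamma> * E (K s a) (\<lambda>s'. D (h@[(s,a)]) s')) \<le> D h s"
    and D_nonneg: "\<And>h s. 0 \<le> D h s" and \<gamma>: "0 \<le> \<gamma>"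
  shows "weighted_return \<pi> K \<gamma> f n h s \<le> hist_sum \<pi> K D n h s"
proof (induction n arbitrary: h s)
  case 0 then show ?case by (simp add: weighted_return_def hist_sum_def)
next
  case (Suc n)
  have "weighted_return \<pi> K \<gamma> f (Suc n) h s
        \<le> D h s + E (\<pi> h s) (\<lambda>a. E (K s a) (\<lambda>s'. hist_sum \<pi> K D n (h@[(s,a)]) s'))"
    unfolding weighted_return_Suc
    by (intro add_mono disc_return_le[OF v step D_nonneg \<gamma>] integral_mono expectation_bool_mono
        Suc.IH integrable_policy[OF v]) auto
  then show ?case by (simp add: hist_sum_Suc)
qed

text \<open>The deficit \<open>W - V\<^sup>\<pi>\<close> at time \<open>t\<close> collects the discounted Bellman gaps of all
  later steps; summed over \<open>t\<close>, the gap of step \<open>u\<close> is counted with weight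
  \<open>1 + \<gamma> + \<dots> + \<gamma>\<^sup>u\<close>.\<close>
lemma weighted_gap_le_expected_regret:
  assumes W: "superharmonic d K \<gamma> W" and Vstar: "\<And>s. Vstar d K \<gamma> s = W s" and \<gamma>: "0 \<le> \<gamma>"
  shows "weighted_return \<pi> K \<gamma> (\<lambda>s a. W s - of_bool s - \<gamma> * E (K s a) W) T [] s\<^sub>0
         \<le> expected_regret d K \<gamma> \<pi> s\<^sub>0 T"
proof -
  have "weighted_return \<pi> K \<gamma> (\<lambda>s a. W s - of_bool s - \<gamma> * E (K s a) W) T [] s\<^sub>0
        \<le> hist_sum \<pi> K (\<lambda>h s. W s - Vpi \<pi> K \<gamma> h s) T [] s\<^sub>0"
    by (rule weighted_return_le_hist_sum[OF deficit_step[OF v W \<gamma>]])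
       (use \<gamma> Vpi_le_superharmonic[OF v W \<gamma>] in auto)
  also have "\<dots> = expected_regret d K \<gamma> \<pi> s\<^sub>0 T"
    unfolding expected_regret_def hist_sum_def Vstar by (simp add: sum_subtractf)
  finally show ?thesis .
qed

end

lemma sum_disc_weight_ge:
  assumes \<gamma>: "0 \<le> \<gamma>" "\<gamma> < 1" and g: "\<And>u. u < T \<Longrightarrow> 0 \<le> g u \<and> g u \<le> 1"
  shows "(\<Sum>u<T. g u) / (1 - \<gamma>) - \<gamma> / (1 - \<gamma>)\<^sup>2 \<le> (\<Sum>u<T. disc_weight \<gamma> u * g u)"
proof -
  define \<delta> where "\<delta> = 1 - \<gamma>"
  have \<delta>: "0 < \<delta>" using \<gamma> by (simp add: \<delta>_def)
  have "(\<Sum>u<T. g u / \<delta> - \<gamma> ^ Suc u / \<delta>) \<le> (\<Sum>u<T. disc_weight \<gamma> u * g u)"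
  proof (rule sum_mono)
    fix u assume "u \<in> {..<T}"
    then have gu: "0 \<le> g u" "g u \<le> 1" using g by auto
    have "\<gamma> ^ Suc u * g u \<le> \<gamma> ^ Suc u * 1" using gu \<gamma> by (intro mult_left_mono) auto
    then have "(g u - \<gamma> ^ Suc u) / \<delta> \<le> (1 - \<gamma> ^ Suc u) * g u / \<delta>"
      using \<delta> by (intro divide_right_mono) (auto simp: algebra_simps)
    moreover have "disc_weight \<gamma> u * g u = (1 - \<gamma> ^ Suc u) * g u / \<delta>"
      unfolding disc_weight_def sum_gp0 \<delta>_def using \<gamma> by simp
    moreover have "g u / \<delta> - \<gamma> ^ Suc u / \<delta> = (g u - \<gamma> ^ Suc u) / \<delta>"
      by (simp add: diff_divide_distrib)
    ultimately show "g u / \<delta> - \<gamma> ^ Suc u / \<delta> \<le> disc_weight \<gamma> u * g u"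
      by linarith
  qed
  moreover have "(\<Sum>u<T. g u / \<delta> - \<gamma> ^ Suc u / \<delta>) = (\<Sum>u<T. g u) / \<delta> - (\<Sum>u<T. \<gamma> ^ Suc u) / \<delta>"
    by (simp add: sum_subtractf sum_divide_distrib[symmetric])
  moreover have "(\<Sum>u<T. \<gamma> ^ Suc u) / \<delta> \<le> \<gamma> / \<delta>\<^sup>2"
  proof -
    have "(\<Sum>u<T. \<gamma> ^ Suc u) = \<gamma> * ((1 - \<gamma> ^ T) / \<delta>)"
      unfolding sum_distrib_left[symmetric] power_Suc sum_gp_strict \<delta>_def using \<gamma> by simp
    also have "\<dots> \<le> \<gamma> * (1 / \<delta>)"
      using \<gamma> \<delta> by (intro mult_left_mono divide_right_mono) auto
    finally have "(\<Sum>u<T. \<gamma> ^ Suc u) / \<delta> \<le> \<gamma> / \<delta> / \<delta>"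
      using \<delta> by (intro divide_right_mono) auto
    then show ?thesis by (simp add: power2_eq_square)
  qed
  ultimately show ?thesis unfolding \<delta>_def by linarith
qed

section \<open>Change of kernel\<close>

definition kernel_ratio :: "kernel \<Rightarrow> kernel \<Rightarrow> state \<Rightarrow> action \<Rightarrow> state \<Rightarrow> real" where
  "kernel_ratio K K' s a s' = pmf (K' s a) s' / pmf (K s a) s'"

text \<open>The policy's probabilities cancel in the density of the trajectory law under \<open>K'\<close>
  with respect to that under \<open>K\<close>, so only the kernels enter.\<close>
definition likelihood_ratio :: "kernel \<Rightarrow> kernel \<Rightarrow> history \<Rightarrow> real" where
  "likelihood_ratio K K' \<tau> =
     (\<Prod>u<length \<tau> - 1. kernel_ratio K K' (fst (\<tau>!u)) (snd (\<tau>!u)) (fst (\<tau>!Suc u)))"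

lemma kernel_ratio_nonneg: "0 \<le> kernel_ratio K K' s a s'"
  by (simp add: kernel_ratio_def)

lemma likelihood_ratio_Cons:
  assumes "r \<noteq> []"
  shows "likelihood_ratio K K' ((s,a)#r) = kernel_ratio K K' s a (fst (r!0)) * likelihood_ratio K K' r"
proof -
  obtain m where m: "length r = Suc m" using assms by (cases r) auto
  show ?thesis unfolding likelihood_ratio_def using m
    by (simp only: length_Cons diff_Suc_1 prod.lessThan_Suc_shift) simp
qed

lemma expectation_traj_likelihood_ratio_Cons:
  assumes v: "valid_policy d \<pi>"
  shows "E (traj \<pi> K\<^sub>0 (Suc m) h s') (\<lambda>r. g r * likelihood_ratio K K' ((s,a)#r))
         = kernel_ratio K K' s a s' * E (traj \<pi> K\<^sub>0 (Suc m) h s') (\<lambda>r. g r * likelihood_ratio K K' r)"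
proof -
  have "E (traj \<pi> K\<^sub>0 (Suc m) h s') (\<lambda>r. g r * likelihood_ratio K K' ((s,a)#r))
        = E (traj \<pi> K\<^sub>0 (Suc m) h s') (\<lambda>r. kernel_ratio K K' s a s' * (g r * likelihood_ratio K K' r))"
  proof (rule integral_cong_AE)
    show "AE r in measure_pmf (traj \<pi> K\<^sub>0 (Suc m) h s').
            g r * likelihood_ratio K K' ((s,a)#r) = kernel_ratio K K' s a s' * (g r * likelihood_ratio K K' r)"
    proof (unfold AE_measure_pmf_iff, intro ballI)
      fix r assume "r \<in> set_pmf (traj \<pi> K\<^sub>0 (Suc m) h s')"
      with set_pmf_traj_D[OF v this] have "r \<noteq> []" "fst (r!0) = s'" by auto
      then show "g r * likelihood_ratio K K' ((s,a)#r) = kernel_ratio K K' s a s' * (g r * likelihood_ratio K K' r)"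
        by (simp add: likelihood_ratio_Cons)
    qed
  qed auto
  then show ?thesis by (simp add: integral_mult_right)
qed

lemma expectation_bool_change_measure:
  fixes p q :: "bool pmf"
  assumes "\<And>x. pmf p x > 0"
  shows "E q G = E p (\<lambda>x. pmf q x / pmf p x * G x)"
proof -
  have "E q G = (\<Sum>x\<in>UNIV. pmf q x *\<^sub>R G x)" by (rule integral_measure_pmf) auto
  also have "\<dots> = (\<Sum>x\<in>UNIV. pmf p x *\<^sub>R (pmf q x / pmf p x * G x))"
    using assms by (intro sum.cong refl) (simp add: field_simps less_imp_neq[symmetric])
  also have "\<dots> = E p (\<lambda>x. pmf q x / pmf p x * G x)" by (rule integral_measure_pmf[symmetric]) auto
  finally show ?thesis .
qed

lemma chi_square_bernoulli:
  fixes p q :: real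
  assumes "0 < p" "p < 1"
  shows "q * (q / p) + (1 - q) * ((1 - q) / (1 - p)) = 1 + (q - p)\<^sup>2 / (p * (1 - p))"
proof -
  have "q * (q / p) + (1 - q) * ((1 - q) / (1 - p)) = (q\<^sup>2 * (1 - p) + (1 - q)\<^sup>2 * p) / (p * (1 - p))"
    using assms by (simp add: field_simps power2_eq_square)
  also have "q\<^sup>2 * (1 - p) + (1 - q)\<^sup>2 * p = p * (1 - p) + (q - p)\<^sup>2"
    by (simp add: power2_eq_square algebra_simps)
  finally show ?thesis using assms by (simp add: add_divide_distrib)
qed

context
  fixes d :: nat and \<pi> :: policy and K K' :: kernel
  assumes v: "valid_policy d \<pi>" and pos: "\<And>s a s'. a \<in> actions d \<Longrightarrow> pmf (K s a) s' > 0"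
begin

lemma expectation_traj_change_kernel:
  "E (traj \<pi> K' n h s) f = E (traj \<pi> K n h s) (\<lambda>\<tau>. f \<tau> * likelihood_ratio K K' \<tau>)"
proof (induction n arbitrary: h s f)
  case 0 then show ?case by (simp add: likelihood_ratio_def)
next
  case (Suc n)
  let ?g = "\<lambda>a r. f ((s,a)#r)"
  have step: "E (K' s a) (\<lambda>s'. E (traj \<pi> K n (h@[(s,a)]) s') (\<lambda>r. ?g a r * likelihood_ratio K K' r))
      = E (K s a) (\<lambda>s'. E (traj \<pi> K n (h@[(s,a)]) s') (\<lambda>r. ?g a r * likelihood_ratio K K' ((s,a)#r)))"
    if a: "a \<in> actions d" for a
  proof (cases n)
    case 0 then show ?thesis by (simp add: likelihood_ratio_def)
  next
    case (Suc m)
    have "E (K' s a) (\<lambda>s'. E (traj \<pi> K n (h@[(s,a)]) s') (\<lambda>r. ?g a r * likelihood_ratio K K' r))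
        = E (K s a) (\<lambda>s'. kernel_ratio K K' s a s'
                             * E (traj \<pi> K n (h@[(s,a)]) s') (\<lambda>r. ?g a r * likelihood_ratio K K' r))"
      unfolding kernel_ratio_def by (rule expectation_bool_change_measure) (use pos a in auto)
    then show ?thesis
      unfolding Suc expectation_traj_likelihood_ratio_Cons[OF v] .
  qed
  have "E (traj \<pi> K' (Suc n) h s) f =
    E (\<pi> h s) (\<lambda>a. E (K' s a) (\<lambda>s'. E (traj \<pi> K n (h@[(s,a)]) s') (\<lambda>r. ?g a r * likelihood_ratio K K' r)))"
    unfolding expectation_traj_Suc[OF v] Suc.IH ..
  also have "\<dots> = E (\<pi> h s)
      (\<lambda>a. E (K s a) (\<lambda>s'. E (traj \<pi> K n (h@[(s,a)]) s') (\<lambda>r. ?g a r * likelihood_ratio K K' ((s,a)#r))))"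
    using step v by (intro integral_cong_AE) (auto simp: AE_measure_pmf_iff valid_policy_def)
  also have "\<dots> = E (traj \<pi> K (Suc n) h s) (\<lambda>\<tau>. f \<tau> * likelihood_ratio K K' \<tau>)"
    unfolding expectation_traj_Suc[OF v] ..
  finally show ?case .
qed

lemma expectation_likelihood_ratio_le_power:
  assumes c: "1 \<le> c"
    and chi: "\<And>s a. a \<in> actions d \<Longrightarrow> E (K' s a) (\<lambda>s'. kernel_ratio K K' s a s') \<le> c"
  shows "E (traj \<pi> K' n h s) (likelihood_ratio K K') \<le> c ^ n"
proof (induction n arbitrary: h s)
  case 0 then show ?case by (simp add: likelihood_ratio_def)
next
  case (Suc n)
  note IH = Suc.IH
  have "E (K' s a) (\<lambda>s'. E (traj \<pi> K' n (h@[(s,a)]) s') (\<lambda>r. likelihood_ratio K K' ((s,a)#r)))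
        \<le> c ^ Suc n" if a: "a \<in> actions d" for a
  proof (cases n)
    case 0 then show ?thesis using c by (simp add: likelihood_ratio_def)
  next
    case (Suc m)
    have "E (K' s a) (\<lambda>s'. E (traj \<pi> K' n (h@[(s,a)]) s') (\<lambda>r. likelihood_ratio K K' ((s,a)#r)))
        \<le> E (K' s a) (\<lambda>s'. kernel_ratio K K' s a s' * c ^ n)"
    proof (rule expectation_bool_mono)
      fix s'
      have "E (traj \<pi> K' n (h@[(s,a)]) s') (\<lambda>r. likelihood_ratio K K' ((s,a)#r))
            = kernel_ratio K K' s a s' * E (traj \<pi> K' n (h@[(s,a)]) s') (likelihood_ratio K K')"
        using expectation_traj_likelihood_ratio_Cons[OF v, where g = "\<lambda>_. 1"]
        unfolding Suc by (simp del: traj.simps)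
      also have "\<dots> \<le> kernel_ratio K K' s a s' * c ^ n"
        by (intro mult_left_mono IH kernel_ratio_nonneg)
      finally show "E (traj \<pi> K' n (h@[(s,a)]) s') (\<lambda>r. likelihood_ratio K K' ((s,a)#r))
                    \<le> kernel_ratio K K' s a s' * c ^ n" .
    qed
    also have "\<dots> = E (K' s a) (\<lambda>s'. kernel_ratio K K' s a s') * c ^ n"
      by (simp add: integral_mult_left)
    also have "\<dots> \<le> c * c ^ n"
      using c by (intro mult_right_mono chi a) auto
    finally show ?thesis by simp
  qed
  then show ?case
    unfolding expectation_traj_Suc[OF v] by (rule expectation_policy_le_const[OF v])
qed

lemma expectation_likelihood_ratio: "E (traj \<pi> K n h s) (likelihood_ratio K K') = 1"
  using expectation_traj_change_kernel[of n h s "\<lambda>_. 1"] by simp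

lemma expectation_one_minus_likelihood_ratio_squared:
  "E (traj \<pi> K n h s) (\<lambda>\<tau>. (1 - likelihood_ratio K K' \<tau>)\<^sup>2)
   = E (traj \<pi> K' n h s) (likelihood_ratio K K') - 1"
proof -
  let ?P = "traj \<pi> K n h s" and ?L = "likelihood_ratio K K'"
  have "E ?P (\<lambda>\<tau>. (1 - ?L \<tau>)\<^sup>2) = E ?P (\<lambda>\<tau>. 1 + (- 2) * ?L \<tau>) + E ?P (\<lambda>\<tau>. ?L \<tau> * ?L \<tau>)"
    by (subst Bochner_Integration.integral_add[symmetric])
       (auto simp: integrable_traj[OF v] power2_eq_square algebra_simps)
  also have "\<dots> = 1 - 2 + E ?P (\<lambda>\<tau>. ?L \<tau> * ?L \<tau>)"
    by (simp add: expectation_affine integrable_traj[OF v] expectation_likelihood_ratio)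
  finally show ?thesis using expectation_traj_change_kernel[of n h s ?L] by simp
qed

lemma mult_le_weighted_squares: "0 < l \<Longrightarrow> (x::real) * y \<le> (l * x\<^sup>2 + y\<^sup>2 / l) / 2"
proof -
  assume l: "0 < l"
  have "0 \<le> (l * x - y)\<^sup>2 / l" using l by simp
  also have "(l * x - y)\<^sup>2 / l = l * x\<^sup>2 + y\<^sup>2 / l - 2 * x * y"
    using l by (simp add: power2_eq_square field_simps)
  finally show ?thesis by simp
qed

lemma expectation_traj_diff_le:
  assumes M: "\<And>\<tau>. \<tau> \<in> set_pmf (traj \<pi> K n h s) \<Longrightarrow> \<bar>H \<tau>\<bar> \<le> M" and l: "0 < l"
  shows "E (traj \<pi> K n h s) H - E (traj \<pi> K' n h s) H
     \<le> (l * M\<^sup>2 + (E (traj \<pi> K' n h s) (likelihood_ratio K K') - 1) / l) / 2"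
proof -
  let ?P = "traj \<pi> K n h s" and ?Q = "traj \<pi> K' n h s" and ?L = "likelihood_ratio K K'"
  have "E ?P H - E ?Q H = E ?P (\<lambda>\<tau>. H \<tau> * (1 - ?L \<tau>))"
    unfolding expectation_traj_change_kernel[of n h s H]
    by (subst Bochner_Integration.integral_diff[symmetric])
       (auto simp: integrable_traj[OF v] right_diff_distrib)
  also have "\<dots> \<le> E ?P (\<lambda>\<tau>. (l * (H \<tau>)\<^sup>2 + (1 - ?L \<tau>)\<^sup>2 / l) / 2)"
    by (intro integral_mono mult_le_weighted_squares l integrable_traj[OF v])
  also have "\<dots> = (l * E ?P (\<lambda>\<tau>. (H \<tau>)\<^sup>2) + E ?P (\<lambda>\<tau>. (1 - ?L \<tau>)\<^sup>2) / l) / 2"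
    by (simp add: integrable_traj[OF v])
  also have "E ?P (\<lambda>\<tau>. (H \<tau>)\<^sup>2) \<le> M\<^sup>2"
  proof -
    have "E ?P (\<lambda>\<tau>. (H \<tau>)\<^sup>2) \<le> E ?P (\<lambda>\<tau>. M\<^sup>2)"
      using M by (intro integral_mono_AE integrable_traj[OF v])
        (auto simp: AE_measure_pmf_iff intro!: power2_le_iff_abs_le[THEN iffD2] order_trans[OF abs_ge_zero])
    then show ?thesis by simp
  qed
  finally show ?thesis
    using l by (simp add: expectation_one_minus_likelihood_ratio_squared divide_right_mono)
qed

end

section \<open>The hard instances\<close>

lemma exists_ge_of_sum_ge:
  fixes f :: "'a \<Rightarrow> real"
  assumes "finite A" "A \<noteq> {}" "real (card A) * c \<le> (\<Sum>x\<in>A. f x)"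
  shows "\<exists>x\<in>A. c \<le> f x"
proof -
  have "real (card A) * c \<le> real (card A) * Max (f ` A)"
    using assms by (intro order.trans[OF assms(3)] sum_bounded_above) auto
  then have "c \<le> Max (f ` A)" using assms(1,2) by (simp add: card_gt_0_iff)
  moreover have "Max (f ` A) \<in> f ` A" using assms(1,2) by simp
  ultimately show ?thesis by auto
qed

lemma vnorm_le: "(\<Sum>i<d. (v i)\<^sup>2) \<le> B\<^sup>2 \<Longrightarrow> 0 \<le> B \<Longrightarrow> vnorm d v \<le> B"
  unfolding vnorm_def by (metis real_sqrt_abs real_sqrt_le_mono abs_of_nonneg)

locale hard_instance =
  fixes d T :: nat and \<gamma> :: real
  assumes d_ge_2: "d \<ge> 2" and \<gamma>_ge: "\<gamma> \<ge> 100/101" and \<gamma>_less_1: "\<gamma> < 1"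
    and T_ge: "real T \<ge> 45 * (real d - 1)\<^sup>2 / (1 - \<gamma>)"
begin

definition "\<delta> = 1 - \<gamma>"
definition "\<Delta> = Delta d \<gamma> T"
definition "\<Delta>bar = Deltabar d \<gamma> T"
definition "\<sigma> = sqrt ((2/5) * (real T / (1 - \<gamma>)) * ln 2)"

text \<open>\<open>\<Delta>bar\<close> is the logarithm of the odds ratio of \<open>\<delta> + \<Delta>\<close> against \<open>\<delta>\<close>.\<close>
definition "odds_ratio = \<gamma> * (\<delta> + \<Delta>) / (\<delta> * (\<gamma> - \<Delta>))"

definition "\<eta> = \<Delta>bar / (real d - 1)"

lemma delta_pos: "0 < \<delta>" using \<gamma>_less_1 by (simp add: \<delta>_def)
lemma delta_le: "\<delta> \<le> 1/101" using \<gamma>_ge by (simp add: \<delta>_def)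
lemma d_minus_1_ge: "real d - 1 \<ge> 1" using d_ge_2 by simp

lemma T_ge_delta: "real T \<ge> 45 * (real d - 1)\<^sup>2 / \<delta>" using T_ge by (simp add: \<delta>_def)

lemma T_pos: "real T > 0"
proof -
  have "45 * (real d - 1)\<^sup>2 / \<delta> > 0" using d_minus_1_ge delta_pos by simp
  then show ?thesis using T_ge_delta by linarith
qed

lemma sigma_ge: "\<sigma> \<ge> (10/3) * (real d - 1) / \<delta>"
proof -
  define X where "X = (real d - 1)\<^sup>2 / \<delta>\<^sup>2"
  have "X \<ge> 0" by (simp add: X_def)
  have "((10/3) * (real d - 1) / \<delta>)\<^sup>2 = (100/9) * X"
    by (simp add: power2_eq_square X_def algebra_simps)
  also have "\<dots> \<le> 12 * X" using \<open>X \<ge> 0\<close> by simp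
  also have "\<dots> = (2/5) * (45 * (real d - 1)\<^sup>2 / \<delta> / \<delta>) * (2/3)"
    by (simp add: power2_eq_square X_def)
  also have "\<dots> \<le> (2/5) * (real T / \<delta>) * ln 2"
    using T_ge_delta delta_pos ln2_ge_two_thirds by (intro mult_mono divide_right_mono) auto
  finally show ?thesis unfolding \<sigma>_def \<delta>_def[symmetric] by (rule real_le_rsqrt)
qed

lemma sigma_pos: "\<sigma> > 0"
proof -
  have "(10/3) * (real d - 1) / \<delta> > 0" using d_minus_1_ge delta_pos by simp
  then show ?thesis using sigma_ge by linarith
qed

lemma Delta_eq: "\<Delta> = (real d - 1) / (45 * \<sigma>)"
  by (simp add: \<Delta>_def Delta_def \<sigma>_def)

lemma Delta_pos: "0 < \<Delta>" using Delta_eq sigma_pos d_minus_1_ge by simp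

lemma Delta_le_delta: "\<Delta> \<le> \<delta> / 150"
proof -
  have "\<Delta> \<le> (real d - 1) / (45 * ((10/3) * (real d - 1) / \<delta>))"
    unfolding Delta_eq using sigma_ge sigma_pos d_minus_1_ge delta_pos
    by (intro divide_left_mono mult_left_mono) auto
  also have "\<dots> = \<delta> / 150" using d_minus_1_ge delta_pos by (simp add: field_simps)
  finally show ?thesis .
qed

lemma gamma_minus_Delta_ge: "\<gamma> - \<Delta> \<ge> 49/50"
  using Delta_le_delta delta_le \<gamma>_ge by simp

lemma Deltabar_eq: "\<Delta>bar = ln odds_ratio"
  unfolding \<Delta>bar_def Deltabar_def odds_ratio_def Let_def \<delta>_def \<Delta>_def by simp

lemma odds_ratio_pos: "odds_ratio > 0"
  unfolding odds_ratio_def using gamma_minus_Delta_ge delta_pos Delta_pos \<gamma>_ge by simp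

lemma exp_Deltabar: "exp \<Delta>bar = odds_ratio"
  unfolding Deltabar_eq using odds_ratio_pos by simp

lemma odds_ratio_minus_1: "odds_ratio - 1 = \<Delta> / (\<delta> * (\<gamma> - \<Delta>))"
proof -
  have "odds_ratio - 1 = (\<gamma> * (\<delta> + \<Delta>) - \<delta> * (\<gamma> - \<Delta>)) / (\<delta> * (\<gamma> - \<Delta>))"
    unfolding odds_ratio_def using gamma_minus_Delta_ge delta_pos by (simp add: diff_divide_distrib)
  also have "\<gamma> * (\<delta> + \<Delta>) - \<delta> * (\<gamma> - \<Delta>) = \<Delta>" by (simp add: \<delta>_def algebra_simps)
  finally show ?thesis .
qed

lemma one_minus_inverse_odds_ratio: "1 - 1 / odds_ratio = \<Delta> / (\<gamma> * (\<delta> + \<Delta>))"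
proof -
  have "1 - 1 / odds_ratio = (\<gamma> * (\<delta> + \<Delta>) - \<delta> * (\<gamma> - \<Delta>)) / (\<gamma> * (\<delta> + \<Delta>))"
    unfolding odds_ratio_def using gamma_minus_Delta_ge delta_pos Delta_pos \<gamma>_ge
    by (simp add: diff_divide_distrib)
  also have "\<gamma> * (\<delta> + \<Delta>) - \<delta> * (\<gamma> - \<Delta>) = \<Delta>" by (simp add: \<delta>_def algebra_simps)
  finally show ?thesis .
qed

lemma Deltabar_le: "\<Delta>bar \<le> \<Delta> / (\<delta> * (\<gamma> - \<Delta>))"
  unfolding Deltabar_eq using ln_le_minus_one[OF odds_ratio_pos] odds_ratio_minus_1 by simp

lemma Deltabar_ge: "\<Delta>bar \<ge> \<Delta> / (\<delta> + \<Delta>)"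
proof -
  have "ln (1/odds_ratio) \<le> 1/odds_ratio - 1" using odds_ratio_pos by (intro ln_le_minus_one) simp
  then have "\<Delta> / (\<gamma> * (\<delta> + \<Delta>)) \<le> \<Delta>bar"
    using odds_ratio_pos unfolding Deltabar_eq one_minus_inverse_odds_ratio[symmetric]
    by (simp add: ln_div)
  moreover have "\<Delta> / (\<delta> + \<Delta>) \<le> \<Delta> / (\<gamma> * (\<delta> + \<Delta>))"
    using Delta_pos delta_pos \<gamma>_ge \<gamma>_less_1 by (intro divide_left_mono) (auto simp: mult_le_cancel_right1)
  ultimately show ?thesis by linarith
qed

lemma Deltabar_pos: "\<Delta>bar > 0"
  using Deltabar_ge Delta_pos delta_pos by (smt (verit) divide_pos_pos)

lemma Deltabar_le_1_99: "\<Delta>bar \<le> 1/99"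
proof -
  have "\<Delta> / (\<delta> * (\<gamma> - \<Delta>)) \<le> (\<delta>/150) / (\<delta> * (49/50))"
    using Delta_pos delta_pos gamma_minus_Delta_ge Delta_le_delta by (intro frac_le mult_left_mono) auto
  also have "\<dots> \<le> 1/99" using delta_pos by simp
  finally show ?thesis using Deltabar_le by linarith
qed

lemma odds_ratio_le: "odds_ratio \<le> 103/100"
proof -
  have f1: "\<gamma> * \<Delta> \<le> \<gamma> * \<delta> / 150" using Delta_le_delta \<gamma>_ge mult_left_mono[of \<Delta> "\<delta>/150" \<gamma>] by auto
  have f2: "\<delta> * \<Delta> \<le> \<delta> * \<delta> / 150" using Delta_le_delta delta_pos mult_left_mono[of \<Delta> "\<delta>/150" \<delta>] by auto
  have f3: "\<delta> * \<delta> \<le> \<delta> / 101" using delta_le delta_pos mult_left_mono[of \<delta> "1/101" \<delta>] by auto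
  have f4: "\<delta> * 100 / 101 \<le> \<gamma> * \<delta>" using \<gamma>_ge delta_pos mult_right_mono[of "100/101" \<gamma> \<delta>] by auto
  have "\<gamma> * \<delta> + \<gamma> * \<Delta> \<le> (103/100) * (\<gamma> * \<delta>) - (103/100) * (\<delta> * \<Delta>)"
    using f1 f2 f3 f4 \<gamma>_ge delta_pos mult_pos_pos[of \<gamma> \<delta>] by linarith
  then have "\<gamma> * (\<delta> + \<Delta>) \<le> 103/100 * (\<delta> * (\<gamma> - \<Delta>))" by (simp add: algebra_simps)
  then show ?thesis unfolding odds_ratio_def using gamma_minus_Delta_ge delta_pos by (simp add: divide_le_eq)
qed

lemma eta_pos: "\<eta> > 0" using Deltabar_pos d_minus_1_ge by (simp add: \<eta>_def)

lemma eta_le: "\<eta> \<le> (50/49) * (\<Delta> / (real d - 1)) / \<delta>"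
proof -
  have "\<eta> \<le> \<Delta> / (\<delta> * (\<gamma> - \<Delta>)) / (real d - 1)"
    unfolding \<eta>_def using Deltabar_le d_minus_1_ge by (intro divide_right_mono) auto
  also have "\<dots> \<le> \<Delta> / (\<delta> * (49/50)) / (real d - 1)"
    using Delta_pos delta_pos gamma_minus_Delta_ge d_minus_1_ge
    by (intro divide_right_mono divide_left_mono mult_left_mono) auto
  also have "\<dots> = (50/49) * (\<Delta> / (real d - 1)) / \<delta>" by (simp add: field_simps)
  finally show ?thesis .
qed

lemma Delta_over_d_squared_le: "(\<Delta> / (real d - 1))\<^sup>2 \<le> \<delta> / (540 * real T)"
proof -
  have e: "\<Delta> / (real d - 1) = 1 / (45 * \<sigma>)" unfolding Delta_eq using d_minus_1_ge by simp
  have "\<sigma>\<^sup>2 = (2/5) * (real T / \<delta>) * ln 2" unfolding \<sigma>_def \<delta>_def using T_pos \<gamma>_less_1 by simp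
  also have "\<dots> \<ge> (2/5) * (real T / \<delta>) * (2/3)"
    using T_pos delta_pos ln2_ge_two_thirds by (intro mult_left_mono) auto
  finally have "2025 * \<sigma>\<^sup>2 \<ge> 540 * real T / \<delta>" by simp
  then have "1 / (2025 * \<sigma>\<^sup>2) \<le> 1 / (540 * real T / \<delta>)"
    using T_pos delta_pos sigma_pos by (intro divide_left_mono) auto
  then show ?thesis unfolding e by (simp add: power2_eq_square)
qed

lemma eta_squared_le: "\<eta>\<^sup>2 \<le> 1 / (500 * real T * \<delta>)"
proof -
  have "\<eta>\<^sup>2 \<le> ((50/49) * (\<Delta> / (real d - 1)) / \<delta>)\<^sup>2"
    using eta_le eta_pos by (intro power_mono) auto
  also have "\<dots> = (50/49)\<^sup>2 * (\<Delta> / (real d - 1))\<^sup>2 / \<delta>\<^sup>2" by (simp only: power_divide power_mult_distrib)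
  also have "\<dots> \<le> (50/49)\<^sup>2 * (\<delta> / (540 * real T)) / \<delta>\<^sup>2"
    using Delta_over_d_squared_le delta_pos by (intro divide_right_mono mult_left_mono) auto
  also have "\<dots> = ((50/49)\<^sup>2 / 540) / (real T * \<delta>)" using delta_pos by (simp add: power2_eq_square field_simps)
  also have "\<dots> \<le> (1/500) / (real T * \<delta>)" using delta_pos T_pos by (intro divide_right_mono) (auto simp: power2_eq_square)
  finally show ?thesis by simp
qed

definition p01 :: "real \<Rightarrow> real" where "p01 x = 1 / (1 + (\<gamma> / \<delta>) * exp (- x))"

lemma gamma_over_delta_pos: "\<gamma> / \<delta> > 0" using delta_pos \<gamma>_ge by simp

lemma p01_denom_pos: "1 + (\<gamma> / \<delta>) * exp (- x) > 0"
  using gamma_over_delta_pos by (intro add_pos_pos mult_pos_pos) auto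

lemma p01_pos: "p01 x > 0"
  unfolding p01_def using p01_denom_pos by simp

lemma one_minus_p01: "1 - p01 x = (\<gamma> / \<delta>) * exp (- x) * p01 x"
  unfolding p01_def using p01_denom_pos[of x] by (simp add: field_simps)

lemma p01_less_1: "p01 x < 1"
  using one_minus_p01[of x] gamma_over_delta_pos p01_pos[of x] by (smt (verit) exp_gt_zero mult_pos_pos)

lemma p01_diff: "p01 y - p01 x = (\<gamma> / \<delta>) * (exp (- x) - exp (- y)) * p01 x * p01 y"
proof -
  define Dx Dy where "Dx = 1 + (\<gamma> / \<delta>) * exp (- x)" and "Dy = 1 + (\<gamma> / \<delta>) * exp (- y)"
  have "Dx > 0" "Dy > 0" unfolding Dx_def Dy_def by (rule p01_denom_pos)+
  moreover have eq: "(\<gamma> / \<delta>) * (exp (- x) - exp (- y)) = Dx - Dy"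
    by (simp add: Dx_def Dy_def algebra_simps)
  ultimately show ?thesis unfolding p01_def Dx_def[symmetric] Dy_def[symmetric] eq
    by (simp add: field_simps)
qed

lemma p01_mono: "x \<le> y \<Longrightarrow> p01 x \<le> p01 y"
  using p01_diff[of y x] gamma_over_delta_pos p01_pos[of x] p01_pos[of y]
  by (smt (verit) exp_le_cancel_iff mult_nonneg_nonneg)

lemma p01_increment_ge:
  assumes "x \<le> y" shows "(1 - p01 y) * p01 x * (y - x) \<le> p01 y - p01 x"
proof -
  have "exp (- y) * (1 + (y - x)) \<le> exp (- y) * exp (y - x)"
    by (intro mult_left_mono exp_ge_add_one_self) auto
  then have "exp (- y) * (y - x) \<le> exp (- x) - exp (- y)"
    by (simp add: algebra_simps flip: exp_add)
  then have "(\<gamma> / \<delta>) * (exp (- y) * (y - x)) * p01 x * p01 y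
             \<le> (\<gamma> / \<delta>) * (exp (- x) - exp (- y)) * p01 x * p01 y"
    using gamma_over_delta_pos p01_pos[THEN less_imp_le] by (intro mult_right_mono mult_left_mono) auto
  then show ?thesis unfolding p01_diff one_minus_p01 by (simp add: ac_simps)
qed

lemma p01_increment_le:
  assumes "x \<le> y" shows "p01 y - p01 x \<le> (y - x) * p01 y"
proof -
  have "exp (- x) * (1 + (x - y)) \<le> exp (- x) * exp (x - y)"
    by (intro mult_left_mono exp_ge_add_one_self) auto
  then have "exp (- x) - exp (- y) \<le> (y - x) * exp (- x)"
    by (simp add: algebra_simps flip: exp_add)
  then have "p01 y - p01 x \<le> (\<gamma> / \<delta>) * ((y - x) * exp (- x)) * p01 x * p01 y"
    unfolding p01_diff using gamma_over_delta_pos p01_pos[THEN less_imp_le] by (intro mult_right_mono mult_left_mono) auto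
  also have "\<dots> = (y - x) * (1 - p01 x) * p01 y" unfolding one_minus_p01 by (simp add: ac_simps)
  also have "\<dots> \<le> (y - x) * p01 y"
  proof -
    have "0 \<le> (y - x) * p01 x * p01 y" using assms p01_pos[of x] p01_pos[of y] by simp
    then show ?thesis by (simp add: algebra_simps)
  qed
  finally show ?thesis .
qed

lemma p01_Deltabar: "p01 \<Delta>bar = \<delta> + \<Delta>"
proof -
  have "exp (- \<Delta>bar) = \<delta> * (\<gamma> - \<Delta>) / (\<gamma> * (\<delta> + \<Delta>))"
    using exp_Deltabar by (simp add: exp_minus inverse_eq_divide odds_ratio_def)
  also have "\<dots> = (\<delta> / \<gamma>) * ((\<gamma> - \<Delta>) / (\<delta> + \<Delta>))" by simp
  finally have e: "(\<gamma> / \<delta>) * exp (- \<Delta>bar) = (\<gamma> - \<Delta>) / (\<delta> + \<Delta>)"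
    using delta_pos \<gamma>_ge by simp
  have "1 + (\<gamma> - \<Delta>) / (\<delta> + \<Delta>) = 1 / (\<delta> + \<Delta>)"
    using delta_pos Delta_pos by (simp add: field_simps \<delta>_def)
  then show ?thesis unfolding p01_def e by simp
qed

lemma p01_minus_Deltabar_ge: "p01 (- \<Delta>bar) \<ge> (9/10) * \<delta>"
proof -
  have "1 + (\<gamma> / \<delta>) * exp \<Delta>bar \<le> 1 + (1 / \<delta>) * (103/100)"
    using exp_Deltabar odds_ratio_le odds_ratio_pos \<gamma>_less_1 delta_pos
    by (intro add_left_mono mult_mono divide_right_mono) auto
  also have "\<dots> \<le> 1 / ((9/10) * \<delta>)" using delta_pos delta_le by (simp add: field_simps)
  finally have "1 / (1 / ((9/10) * \<delta>)) \<le> p01 (- \<Delta>bar)"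
    unfolding p01_def using p01_denom_pos[of "- \<Delta>bar"] delta_pos
    by (intro divide_left_mono) (auto simp: zero_less_mult_iff)
  then show ?thesis by simp
qed

definition "log_odds = ln (1 / (1 - \<gamma>) - 1)"

lemma exp_log_odds: "exp log_odds = \<gamma> / \<delta>"
proof -
  have "1 / (1 - \<gamma>) - 1 = \<gamma> / \<delta>" using delta_pos by (simp add: \<delta>_def field_simps)
  then show ?thesis unfolding log_odds_def using gamma_over_delta_pos by simp
qed

lemma alpha_pos: "alpha d \<gamma> T > 0"
  unfolding alpha_def \<Delta>bar_def[symmetric] using Deltabar_pos d_minus_1_ge by (simp add: add_pos_pos)

lemma beta_pos: "beta d \<gamma> T > 0"
  unfolding beta_def \<Delta>bar_def[symmetric] using Deltabar_pos by (simp add: add_pos_pos)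

definition inner_act :: "(nat \<Rightarrow> real) \<Rightarrow> action \<Rightarrow> real" where
  "inner_act \<theta> a = (\<Sum>i<d-1. a i * \<theta> i)"

lemma sum_lessThan_d: "(\<Sum>i<d. f i) = (\<Sum>i<d-1. f i) + f (d - 1)"
proof -
  have "d = Suc (d - 1)" using d_ge_2 by simp
  then show ?thesis by (metis sum.lessThan_Suc)
qed

lemma vinner_x0_x0:
  "vinner d (phi d \<gamma> T False a False) (thetabar d \<gamma> T \<theta>) = - inner_act \<theta> a + log_odds"
  unfolding vinner_def sum_lessThan_d using alpha_pos beta_pos
  by (simp add: phi_def thetabar_def log_odds_def inner_act_def sum_negf)

lemma vinner_x1_x1: "vinner d (phi d \<gamma> T True a True) (thetabar d \<gamma> T \<theta>) = log_odds"
  unfolding vinner_def sum_lessThan_d using beta_pos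
  by (simp add: phi_def thetabar_def log_odds_def)

lemma vinner_x0_x1: "vinner d (phi d \<gamma> T False a True) (thetabar d \<gamma> T \<theta>) = 0"
  by (simp add: vinner_def phi_def)

lemma vinner_x1_x0: "vinner d (phi d \<gamma> T True a False) (thetabar d \<gamma> T \<theta>) = 0"
  by (simp add: vinner_def phi_def)

lemma pmf_trans_x0_x1: "pmf (trans_M d \<gamma> T \<theta> False a) True = p01 (inner_act \<theta> a)"
proof -
  have "exp 0 / (exp (- inner_act \<theta> a + log_odds) + exp 0) = p01 (inner_act \<theta> a)"
    unfolding exp_add exp_log_odds p01_def by (simp add: add.commute mult.commute)
  then show ?thesis unfolding trans_M_def vinner_x0_x0 vinner_x0_x1
    using p01_pos[of "inner_act \<theta> a"] p01_less_1[of "inner_act \<theta> a"] by simp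
qed

lemma pmf_trans_x1_x1: "pmf (trans_M d \<gamma> T \<theta> True a) True = \<gamma>"
proof -
  have "exp log_odds / (exp 0 + exp log_odds) = \<gamma>"
    unfolding exp_log_odds using delta_pos by (simp add: field_simps \<delta>_def)
  then show ?thesis unfolding trans_M_def vinner_x1_x1 vinner_x1_x0 using \<gamma>_ge \<gamma>_less_1 by simp
qed

lemma pmf_trans_x1_x0: "pmf (trans_M d \<gamma> T \<theta> True a) False = \<delta>"
  using pmf_trans_x1_x1 by (simp add: pmf_False_conv_True \<delta>_def)

lemma pmf_trans_x0_x0: "pmf (trans_M d \<gamma> T \<theta> False a) False = 1 - p01 (inner_act \<theta> a)"
  using pmf_trans_x0_x1 by (simp add: pmf_False_conv_True)

lemma pmf_trans_pos: "pmf (trans_M d \<gamma> T \<theta> s a) s' > 0"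
  using p01_pos[of "inner_act \<theta> a"] p01_less_1[of "inner_act \<theta> a"] delta_pos \<gamma>_ge
  by (cases s; cases s') (auto simp: pmf_trans_x0_x1 pmf_trans_x0_x0 pmf_trans_x1_x1 pmf_trans_x1_x0)

definition opt_sign :: "(nat \<Rightarrow> real) \<Rightarrow> nat \<Rightarrow> real" where
  "opt_sign \<theta> i = (if \<theta> i > 0 then 1 else -1)"

definition opt_action :: "(nat \<Rightarrow> real) \<Rightarrow> action" where
  "opt_action \<theta> = (\<lambda>i. if i < d - 1 then opt_sign \<theta> i else 0)"

definition mismatch :: "(nat \<Rightarrow> real) \<Rightarrow> action \<Rightarrow> nat \<Rightarrow> real" where
  "mismatch \<theta> a i = (1 - a i * opt_sign \<theta> i) / 2"

lemma Theta_coord: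
  assumes "\<theta> \<in> Theta d \<gamma> T" "i < d - 1" shows "\<theta> i = \<eta> * opt_sign \<theta> i"
proof -
  have "\<Delta>bar / (real d - 1) > 0" using Deltabar_pos d_minus_1_ge by simp
  moreover from assms have "\<theta> i = - (\<Delta>bar / (real d - 1)) \<or> \<theta> i = \<Delta>bar / (real d - 1)"
    by (auto simp: Theta_def \<Delta>bar_def)
  ultimately show ?thesis by (auto simp: opt_sign_def \<eta>_def)
qed

lemma mismatch_01: "a \<in> actions d \<Longrightarrow> i < d - 1 \<Longrightarrow> mismatch \<theta> a i = 0 \<or> mismatch \<theta> a i = 1"
  unfolding actions_def mismatch_def opt_sign_def by auto

lemma sum_mismatch_bounds:
  assumes "a \<in> actions d"
  shows "0 \<le> (\<Sum>i<d-1. mismatch \<theta> a i)" "(\<Sum>i<d-1. mismatch \<theta> a i) \<le> real d - 1"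
proof -
  have w: "0 \<le> mismatch \<theta> a i \<and> mismatch \<theta> a i \<le> 1" if "i \<in> {..<d-1}" for i
    using mismatch_01[OF assms, of i \<theta>] that by auto
  show "0 \<le> (\<Sum>i<d-1. mismatch \<theta> a i)" using w by (intro sum_nonneg) blast
  have "(\<Sum>i<d-1. mismatch \<theta> a i) \<le> (\<Sum>i<d-1. 1)" using w by (intro sum_mono) blast
  then show "(\<Sum>i<d-1. mismatch \<theta> a i) \<le> real d - 1" using d_ge_2 by (simp add: of_nat_diff)
qed

lemma inner_act_eq_mismatches:
  assumes "\<theta> \<in> Theta d \<gamma> T"
  shows "inner_act \<theta> a = \<Delta>bar - 2 * \<eta> * (\<Sum>i<d-1. mismatch \<theta> a i)"
proof -
  have "inner_act \<theta> a = (\<Sum>i<d-1. \<eta> - 2 * \<eta> * mismatch \<theta> a i)"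
    unfolding inner_act_def
    by (rule sum.cong[OF refl])
       (simp add: Theta_coord[OF assms] mismatch_def algebra_simps add_divide_distrib diff_divide_distrib)
  also have "\<dots> = (real d - 1) * \<eta> - 2 * \<eta> * (\<Sum>i<d-1. mismatch \<theta> a i)"
    using d_ge_2 by (simp add: sum_subtractf sum_distrib_left of_nat_diff)
  also have "(real d - 1) * \<eta> = \<Delta>bar" unfolding \<eta>_def using d_minus_1_ge by simp
  finally show ?thesis .
qed

lemma inner_act_bounds:
  assumes "\<theta> \<in> Theta d \<gamma> T" "a \<in> actions d"
  shows "- \<Delta>bar \<le> inner_act \<theta> a" "inner_act \<theta> a \<le> \<Delta>bar"
proof -
  have "2 * \<eta> * (\<Sum>i<d-1. mismatch \<theta> a i) \<le> 2 * \<eta> * (real d - 1)"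
    using sum_mismatch_bounds[OF assms(2)] eta_pos by (intro mult_left_mono) auto
  moreover have "2 * \<eta> * (real d - 1) = 2 * \<Delta>bar" unfolding \<eta>_def using d_minus_1_ge by simp
  ultimately show "- \<Delta>bar \<le> inner_act \<theta> a" unfolding inner_act_eq_mismatches[OF assms(1)] by simp
  have "0 \<le> 2 * \<eta> * (\<Sum>i<d-1. mismatch \<theta> a i)" using sum_mismatch_bounds[OF assms(2)] eta_pos by simp
  then show "inner_act \<theta> a \<le> \<Delta>bar" unfolding inner_act_eq_mismatches[OF assms(1)] by simp
qed

lemma opt_action_in_actions: "opt_action \<theta> \<in> actions d"
  by (simp add: opt_action_def actions_def opt_sign_def)

lemma inner_act_opt_action: "\<theta> \<in> Theta d \<gamma> T \<Longrightarrow> inner_act \<theta> (opt_action \<theta>) = \<Delta>bar"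
  unfolding inner_act_eq_mismatches
  by (simp add: mismatch_def opt_action_def opt_sign_def sum.neutral)

definition "p_max = \<delta> + \<Delta>"

lemma p_max_le: "p_max \<le> (151/150) * \<delta>" using Delta_le_delta by (simp add: p_max_def)
lemma p_max_pos: "p_max > 0" using delta_pos Delta_pos by (simp add: p_max_def)
lemma p_max_le_1_50: "p_max \<le> 1/50" using p_max_le delta_le by simp
lemma p01_Deltabar_eq_p_max: "p01 \<Delta>bar = p_max" using p01_Deltabar by (simp add: p_max_def)

lemma p01_inner_act_bounds:
  assumes "\<theta> \<in> Theta d \<gamma> T" "a \<in> actions d"
  shows "(9/10) * \<delta> \<le> p01 (inner_act \<theta> a)" "p01 (inner_act \<theta> a) \<le> p_max"
  using p01_minus_Deltabar_ge p01_mono[OF inner_act_bounds(1)[OF assms]]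
    p01_mono[OF inner_act_bounds(2)[OF assms]]
  by (simp_all add: p01_Deltabar_eq_p_max)

text \<open>The value of the stationary policy playing \<open>opt_action \<theta>\<close>, under which \<open>x\<^sub>0\<close> moves
  to \<open>x\<^sub>1\<close> with probability \<open>p_max\<close>; \<open>Vgap\<close> is the value difference between the two states.\<close>
definition "Vgap = 1 / (1 - \<gamma>\<^sup>2 + \<gamma> * p_max)"
definition "V0 = \<gamma> * p_max * Vgap / \<delta>"
definition "V1 = V0 + Vgap"
definition Vopt :: "state \<Rightarrow> real" where "Vopt s = (if s then V1 else V0)"

lemma Vgap_denom_pos: "1 - \<gamma>\<^sup>2 + \<gamma> * p_max > 0"
proof -
  have "\<gamma>\<^sup>2 < 1" using \<gamma>_ge \<gamma>_less_1 by (simp add: power_less_one_iff)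
  then show ?thesis using p_max_pos \<gamma>_ge by (simp add: add_pos_pos)
qed

lemma Vgap_pos: "Vgap > 0" using Vgap_denom_pos by (simp add: Vgap_def)
lemma Vgap_eq: "Vgap * (1 - \<gamma>\<^sup>2 + \<gamma> * p_max) = 1" using Vgap_denom_pos by (simp add: Vgap_def)
lemma V0_nonneg: "V0 \<ge> 0" using Vgap_pos p_max_pos \<gamma>_ge delta_pos by (simp add: V0_def)
lemma V0_eq: "\<delta> * V0 = \<gamma> * p_max * Vgap" using delta_pos by (simp add: V0_def)
lemma Vopt_nonneg: "Vopt s \<ge> 0" using V0_nonneg Vgap_pos by (simp add: Vopt_def V1_def)
lemma Vopt_le: "Vopt s \<le> V1" using Vgap_pos by (simp add: Vopt_def V1_def)

lemma expectation_Vopt_x0: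
  "E (trans_M d \<gamma> T \<theta> False a) Vopt = V0 + p01 (inner_act \<theta> a) * Vgap"
  by (simp add: expectation_bool pmf_trans_x0_x1 pmf_trans_x0_x0 Vopt_def V1_def algebra_simps)

lemma expectation_Vopt_x1: "E (trans_M d \<gamma> T \<theta> True a) Vopt = V1 - \<delta> * Vgap"
proof -
  have "E (trans_M d \<gamma> T \<theta> True a) Vopt = \<gamma> * V1 + \<delta> * V0"
    by (simp add: expectation_bool pmf_trans_x1_x1 pmf_trans_x1_x0 Vopt_def)
  also have "\<dots> = V1 - \<delta> * Vgap" unfolding V1_def \<delta>_def by (simp add: algebra_simps)
  finally show ?thesis .
qed

definition bellman_gap :: "(nat \<Rightarrow> real) \<Rightarrow> state \<Rightarrow> action \<Rightarrow> real" where
  "bellman_gap \<theta> s a = Vopt s - of_bool s - \<gamma> * E (trans_M d \<gamma> T \<theta> s a) Vopt"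

lemma bellman_gap_x1: "bellman_gap \<theta> True a = 0"
proof -
  have "1 - \<gamma>\<^sup>2 = \<delta> * (1 + \<gamma>)" by (simp add: \<delta>_def power2_eq_square algebra_simps)
  then have "Vgap * (\<delta> * (1 + \<gamma>) + \<gamma> * p_max) = 1" using Vgap_eq by simp
  then have "Vgap * \<delta> + Vgap * \<delta> * \<gamma> + \<gamma> * p_max * Vgap = 1" by (simp add: algebra_simps)
  then have "Vgap * \<delta> + Vgap * \<delta> * \<gamma> + \<delta> * V0 = 1" using V0_eq by simp
  then have "1 + \<gamma> * (V1 - \<delta> * Vgap) = V1" unfolding V1_def \<delta>_def by algebra
  then show ?thesis by (simp add: bellman_gap_def expectation_Vopt_x1 Vopt_def)
qed

lemma bellman_gap_x0: "bellman_gap \<theta> False a = \<gamma> * (p_max - p01 (inner_act \<theta> a)) * Vgap"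
proof -
  have "V0 = \<gamma> * (V0 + p_max * Vgap)" using V0_eq unfolding \<delta>_def by algebra
  then show ?thesis by (simp add: bellman_gap_def expectation_Vopt_x0 Vopt_def algebra_simps)
qed

section \<open>Regret on a single instance\<close>

definition "gap_rate = \<gamma> * Vgap * (1 - p_max) * ((9/10) * \<delta>) * (2 * \<eta>)"

lemma gap_rate_nonneg: "gap_rate \<ge> 0"
  unfolding gap_rate_def using \<gamma>_ge Vgap_pos p_max_le_1_50 delta_pos eta_pos by simp

definition mismatch_count :: "(nat \<Rightarrow> real) \<Rightarrow> nat \<Rightarrow> history \<Rightarrow> real" where
  "mismatch_count \<theta> i \<tau> = (\<Sum>u<T. if fst (\<tau>!u) then 0 else mismatch \<theta> (snd (\<tau>!u)) i)"

context
  fixes \<theta> assumes \<theta>: "\<theta> \<in> Theta d \<gamma> T"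
begin

lemma bellman_gap_bounds:
  assumes a: "a \<in> actions d" shows "0 \<le> bellman_gap \<theta> s a" "bellman_gap \<theta> s a \<le> 1"
proof -
  have p: "p01 (inner_act \<theta> a) \<le> p_max" by (rule p01_inner_act_bounds(2)[OF \<theta> a])
  show "0 \<le> bellman_gap \<theta> s a"
    by (cases s) (use p \<gamma>_ge Vgap_pos in \<open>auto simp: bellman_gap_x1 bellman_gap_x0\<close>)
  have "\<gamma> * (p_max - p01 (inner_act \<theta> a)) * Vgap \<le> \<gamma> * p_max * Vgap"
    using p01_pos[of "inner_act \<theta> a"] \<gamma>_ge Vgap_pos by (intro mult_right_mono mult_left_mono) auto
  also have "\<gamma> * p_max * Vgap \<le> (1 - \<gamma>\<^sup>2 + \<gamma> * p_max) * Vgap"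
    using \<gamma>_less_1 \<gamma>_ge Vgap_pos by (intro mult_right_mono) (auto simp: power_le_one)
  finally show "bellman_gap \<theta> s a \<le> 1"
    by (cases s) (auto simp: bellman_gap_x1 bellman_gap_x0 Vgap_eq mult.commute)
qed

lemma superharmonic_Vopt: "superharmonic d (trans_M d \<gamma> T \<theta>) \<gamma> Vopt"
  unfolding superharmonic_def
proof (intro conjI allI impI)
  fix s a assume "a \<in> actions d"
  then show "of_bool s + \<gamma> * E (trans_M d \<gamma> T \<theta> s a) Vopt \<le> Vopt s"
    using bellman_gap_bounds(1)[of a s] unfolding bellman_gap_def by simp
qed (rule Vopt_nonneg)

lemma Vopt_Bellman_eq: "Vopt s = of_bool s + \<gamma> * E (trans_M d \<gamma> T \<theta> s (opt_action \<theta>)) Vopt"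
  using bellman_gap_x1 bellman_gap_x0[of \<theta> "opt_action \<theta>"] inner_act_opt_action[OF \<theta>]
  unfolding bellman_gap_def by (cases s) (simp_all add: p01_Deltabar_eq_p_max)

lemma Vstar_eq_Vopt: "Vstar d (trans_M d \<gamma> T \<theta>) \<gamma> s = Vopt s"
  by (rule Vstar_eq_superharmonic[OF superharmonic_Vopt opt_action_in_actions Vopt_Bellman_eq Vopt_le])
     (use \<gamma>_ge \<gamma>_less_1 in auto)


text \<open>In \<open>x\<^sub>0\<close>, every coordinate in which the action disagrees with the sign of \<open>\<theta>\<close> lowers
  \<open>\<langle>a, \<theta>\<rangle>\<close> by \<open>2 \<eta>\<close>, and on \<open>[-\<Delta>bar, \<Delta>bar]\<close> the slope of \<open>p01\<close> is at least
  \<open>(1 - p_max) \<cdot> (9/10) \<delta>\<close>.\<close>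
lemma bellman_gap_ge:
  assumes a: "a \<in> actions d"
  shows "gap_rate * (if s then 0 else (\<Sum>i<d-1. mismatch \<theta> a i)) \<le> bellman_gap \<theta> s a"
proof (cases s)
  case True then show ?thesis using bellman_gap_bounds[OF a] by simp
next
  case False
  let ?x = "inner_act \<theta> a" and ?S = "(\<Sum>i<d-1. mismatch \<theta> a i)"
  have dx: "\<Delta>bar - ?x = 2 * \<eta> * ?S" using inner_act_eq_mismatches[OF \<theta>] by simp
  have "(1 - p_max) * ((9/10) * \<delta>) * (2 * \<eta> * ?S) \<le> (1 - p01 \<Delta>bar) * p01 ?x * (\<Delta>bar - ?x)"
    unfolding dx p01_Deltabar_eq_p_max
    using p01_inner_act_bounds[OF \<theta> a] p_max_le_1_50 sum_mismatch_bounds[OF a] eta_pos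
    by (intro mult_right_mono mult_left_mono) auto
  also have "\<dots> \<le> p_max - p01 ?x"
    using p01_increment_ge[OF inner_act_bounds(2)[OF \<theta> a]] by (simp add: p01_Deltabar_eq_p_max)
  finally show ?thesis
    using False \<gamma>_ge Vgap_pos by (simp add: bellman_gap_x0 gap_rate_def mult_left_mono mult_ac)
qed

lemma weighted_bellman_gap_ge:
  assumes \<tau>: "\<And>u. u < T \<Longrightarrow> snd (\<tau>!u) \<in> actions d"
  shows "gap_rate * (\<Sum>i<d-1. mismatch_count \<theta> i \<tau>) / \<delta> - \<gamma> / \<delta>\<^sup>2
         \<le> (\<Sum>u<T. disc_weight \<gamma> u * bellman_gap \<theta> (fst (\<tau>!u)) (snd (\<tau>!u)))"
proof -
  have "(\<Sum>i<d-1. mismatch_count \<theta> i \<tau>)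
        = (\<Sum>u<T. if fst (\<tau>!u) then 0 else (\<Sum>i<d-1. mismatch \<theta> (snd (\<tau>!u)) i))"
    unfolding mismatch_count_def by (subst sum.swap) (rule sum.cong[OF refl], simp)
  then have "gap_rate * (\<Sum>i<d-1. mismatch_count \<theta> i \<tau>)
        = (\<Sum>u<T. gap_rate * (if fst (\<tau>!u) then 0 else (\<Sum>i<d-1. mismatch \<theta> (snd (\<tau>!u)) i)))"
    by (simp add: sum_distrib_left)
  also have "\<dots> \<le> (\<Sum>u<T. bellman_gap \<theta> (fst (\<tau>!u)) (snd (\<tau>!u)))"
    by (intro sum_mono bellman_gap_ge \<tau>) auto
  finally have "gap_rate * (\<Sum>i<d-1. mismatch_count \<theta> i \<tau>) / \<delta>
                \<le> (\<Sum>u<T. bellman_gap \<theta> (fst (\<tau>!u)) (snd (\<tau>!u))) / \<delta>"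
    using delta_pos by (intro divide_right_mono) auto
  moreover have "(\<Sum>u<T. bellman_gap \<theta> (fst (\<tau>!u)) (snd (\<tau>!u))) / \<delta> - \<gamma> / \<delta>\<^sup>2
      \<le> (\<Sum>u<T. disc_weight \<gamma> u * bellman_gap \<theta> (fst (\<tau>!u)) (snd (\<tau>!u)))"
    unfolding \<delta>_def using \<gamma>_ge \<gamma>_less_1 bellman_gap_bounds[OF \<tau>]
    by (intro sum_disc_weight_ge) auto
  ultimately show ?thesis by linarith
qed

lemma expected_regret_ge:
  assumes v: "valid_policy d \<pi>"
  shows "gap_rate / \<delta> * (\<Sum>i<d-1. E (traj \<pi> (trans_M d \<gamma> T \<theta>) T [] False) (mismatch_count \<theta> i))
           - \<gamma> / \<delta>\<^sup>2
         \<le> expected_regret d (trans_M d \<gamma> T \<theta>) \<gamma> \<pi> False T"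
proof -
  let ?P = "traj \<pi> (trans_M d \<gamma> T \<theta>) T [] False"
  have "gap_rate / \<delta> * (\<Sum>i<d-1. E ?P (mismatch_count \<theta> i)) - \<gamma> / \<delta>\<^sup>2
        = E ?P (\<lambda>\<tau>. gap_rate * (\<Sum>i<d-1. mismatch_count \<theta> i \<tau>) / \<delta> - \<gamma> / \<delta>\<^sup>2)"
    by (simp add: integrable_traj[OF v] integral_sum)
  also have "\<dots> \<le> weighted_return \<pi> (trans_M d \<gamma> T \<theta>) \<gamma> (bellman_gap \<theta>) T [] False"
    unfolding weighted_return_def
  proof (intro integral_mono_AE integrable_traj[OF v], unfold AE_measure_pmf_iff, intro ballI)
    fix \<tau> assume "\<tau> \<in> set_pmf ?P"
    with set_pmf_traj_D[OF v this] show "gap_rate * (\<Sum>i<d-1. mismatch_count \<theta> i \<tau>) / \<delta> - \<gamma> / \<delta>\<^sup>2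
        \<le> (\<Sum>u<T. disc_weight \<gamma> u * bellman_gap \<theta> (fst (\<tau>!u)) (snd (\<tau>!u)))"
      by (intro weighted_bellman_gap_ge) blast
  qed
  also have "\<dots> \<le> expected_regret d (trans_M d \<gamma> T \<theta>) \<gamma> \<pi> False T"
    using weighted_gap_le_expected_regret[OF v superharmonic_Vopt Vstar_eq_Vopt] \<gamma>_ge
    by (simp add: bellman_gap_def[abs_def])
  finally show ?thesis .
qed

end

section \<open>Neighbouring instances\<close>

definition flip_coord :: "nat \<Rightarrow> (nat \<Rightarrow> real) \<Rightarrow> (nat \<Rightarrow> real)" where
  "flip_coord i \<theta> = \<theta>(i := - \<theta> i)"

definition time_in_x0 :: "history \<Rightarrow> real" where
  "time_in_x0 \<tau> = (\<Sum>u<T. if fst (\<tau>!u) then 0 else 1)"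

lemma flip_coord_flip_coord: "flip_coord i (flip_coord i \<theta>) = \<theta>"
  by (simp add: flip_coord_def)

lemma flip_coord_Theta: "\<theta> \<in> Theta d \<gamma> T \<Longrightarrow> i < d - 1 \<Longrightarrow> flip_coord i \<theta> \<in> Theta d \<gamma> T"
  unfolding Theta_def flip_coord_def by auto

lemma bij_betw_flip_coord: "i < d - 1 \<Longrightarrow> bij_betw (flip_coord i) (Theta d \<gamma> T) (Theta d \<gamma> T)"
  by (rule bij_betw_byWitness[where f'="flip_coord i"]) (auto simp: flip_coord_flip_coord flip_coord_Theta)

lemma mismatch_count_flip_coord:
  assumes "\<theta> \<in> Theta d \<gamma> T" "i < d - 1"
  shows "mismatch_count (flip_coord i \<theta>) i \<tau> = time_in_x0 \<tau> - mismatch_count \<theta> i \<tau>"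
proof -
  have "opt_sign (flip_coord i \<theta>) i = - opt_sign \<theta> i"
    using Theta_coord[OF assms] eta_pos by (auto simp: opt_sign_def flip_coord_def)
  then have "mismatch (flip_coord i \<theta>) a i = 1 - mismatch \<theta> a i" for a
    by (simp add: mismatch_def field_simps)
  then show ?thesis
    unfolding mismatch_count_def time_in_x0_def sum_subtractf[symmetric] by (intro sum.cong) auto
qed

lemma abs_inner_act_flip_coord:
  assumes "\<theta> \<in> Theta d \<gamma> T" "i < d - 1" "a \<in> actions d"
  shows "\<bar>inner_act (flip_coord i \<theta>) a - inner_act \<theta> a\<bar> = 2 * \<eta>"
proof -
  have "inner_act (flip_coord i \<theta>) a = (\<Sum>j<d-1. a j * \<theta> j - (if j = i then 2 * (a i * \<theta> i) else 0))"
    unfolding inner_act_def flip_coord_def by (intro sum.cong) auto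
  also have "\<dots> = inner_act \<theta> a - 2 * (a i * \<theta> i)"
    using assms(2) by (simp add: sum_subtractf inner_act_def)
  finally have "inner_act (flip_coord i \<theta>) a - inner_act \<theta> a = - 2 * (a i * \<theta> i)" by simp
  moreover have "a i = 1 \<or> a i = -1" using assms(2,3) by (auto simp: actions_def)
  ultimately show ?thesis
    unfolding Theta_coord[OF assms(1,2)] using eta_pos by (auto simp: opt_sign_def abs_mult)
qed

lemma p01_diff_abs_le:
  assumes "- \<Delta>bar \<le> x" "x \<le> \<Delta>bar" "- \<Delta>bar \<le> y" "y \<le> \<Delta>bar" "\<bar>y - x\<bar> \<le> 2 * \<eta>"
  shows "\<bar>p01 y - p01 x\<bar> \<le> 2 * \<eta> * p_max"
proof -
  have "p01 v - p01 u \<le> 2 * \<eta> * p_max"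
    if "u \<le> v" "v \<le> \<Delta>bar" "v - u \<le> 2 * \<eta>" for u v
  proof -
    have "p01 v - p01 u \<le> (v - u) * p01 v" by (rule p01_increment_le[OF \<open>u \<le> v\<close>])
    also have "\<dots> \<le> (2 * \<eta>) * p_max"
      using that p01_mono[OF \<open>v \<le> \<Delta>bar\<close>] p01_pos[of v] unfolding p01_Deltabar_eq_p_max
      by (intro mult_mono) auto
    finally show ?thesis by simp
  qed
  from this[of x y] this[of y x] assms p01_mono[of x y] p01_mono[of y x] show ?thesis
    by (cases "x \<le> y") auto
qed

text \<open>Flipping one coordinate moves \<open>\<langle>a, \<theta>\<rangle>\<close> by \<open>2 \<eta> = O(1/\<surd>(T \<delta>))\<close>, so each step has
  \<open>\<chi>\<^sup>2\<close>-divergence \<open>O(1/T)\<close> between the two kernels.\<close>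
lemma chi_square_flip_le:
  assumes \<theta>: "\<theta> \<in> Theta d \<gamma> T" and i: "i < d - 1" and a: "a \<in> actions d"
  shows "E (trans_M d \<gamma> T (flip_coord i \<theta>) s a)
           (kernel_ratio (trans_M d \<gamma> T \<theta>) (trans_M d \<gamma> T (flip_coord i \<theta>)) s a)
         \<le> 1 + 1 / (17 * real T)"
proof (cases s)
  case True
  have "kernel_ratio (trans_M d \<gamma> T \<theta>) (trans_M d \<gamma> T (flip_coord i \<theta>)) True a = (\<lambda>_. 1)"
  proof
    fix s' show "kernel_ratio (trans_M d \<gamma> T \<theta>) (trans_M d \<gamma> T (flip_coord i \<theta>)) True a s' = 1"
      unfolding kernel_ratio_def using \<gamma>_ge delta_pos
      by (cases s') (simp_all add: pmf_trans_x1_x1 pmf_trans_x1_x0)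
  qed
  then show ?thesis using True T_pos by simp
next
  case False
  let ?x = "inner_act \<theta> a" and ?y = "inner_act (flip_coord i \<theta>) a"
  let ?p = "p01 ?x" and ?q = "p01 ?y"
  have "\<bar>?q - ?p\<bar> \<le> 2 * \<eta> * p_max"
    using inner_act_bounds[OF \<theta> a] inner_act_bounds[OF flip_coord_Theta[OF \<theta> i] a]
      abs_inner_act_flip_coord[OF \<theta> i a]
    by (intro p01_diff_abs_le) auto
  then have "(?q - ?p)\<^sup>2 \<le> (2 * \<eta> * p_max)\<^sup>2"
    using eta_pos p_max_pos by (intro power2_le_iff_abs_le[THEN iffD2]) auto
  moreover have "((9/10) * \<delta>) * (49/50) \<le> ?p * (1 - ?p)"
    using p01_inner_act_bounds[OF \<theta> a] p_max_le_1_50 delta_pos by (intro mult_mono) auto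
  ultimately have "(?q - ?p)\<^sup>2 / (?p * (1 - ?p)) \<le> (2 * \<eta> * p_max)\<^sup>2 / (((9/10) * \<delta>) * (49/50))"
    using delta_pos by (intro frac_le) auto
  also have "\<dots> = 4 * \<eta>\<^sup>2 * p_max\<^sup>2 / ((441/500) * \<delta>)" by (simp add: power2_eq_square)
  also have "\<dots> \<le> 4 * (1 / (500 * real T * \<delta>)) * ((151/150) * \<delta>)\<^sup>2 / ((441/500) * \<delta>)"
    using eta_squared_le p_max_le p_max_pos delta_pos
    by (intro divide_right_mono mult_mono mult_left_mono power_mono) auto
  also have "\<dots> = (4 * (151/150)\<^sup>2 / 441) / real T"
    using delta_pos T_pos by (simp add: power2_eq_square field_simps)
  also have "\<dots> \<le> 1 / (17 * real T)" using T_pos by (simp add: power2_eq_square field_simps)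
  finally show ?thesis
    using False chi_square_bernoulli[OF p01_pos[of ?x] p01_less_1[of ?x], of ?q]
    by (simp add: expectation_bool kernel_ratio_def pmf_trans_x0_x1 pmf_trans_x0_x0)
qed

lemma one_plus_inverse_power_le: "(1 + 1 / (17 * real T)) ^ T \<le> 17/16"
proof -
  have "(1 + 1 / (17 * real T)) ^ T \<le> exp (1 / (17 * real T)) ^ T"
    using exp_ge_add_one_self[of "1 / (17 * real T)"] by (intro power_mono) (auto simp: add.commute)
  also have "\<dots> = exp (1/17)"
    using T_pos by (simp flip: exp_of_nat_mult)
  also have "\<dots> \<le> 17/16"
  proof -
    have "16/17 \<le> exp (- 1/17 :: real)" using exp_ge_add_one_self[of "- 1/17"] by simp
    then show ?thesis by (simp add: exp_minus divide_le_eq field_simps)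
  qed
  finally show ?thesis .
qed

lemma mismatch_count_bounds:
  assumes v: "valid_policy d \<pi>" and i: "i < d - 1" and \<tau>: "\<tau> \<in> set_pmf (traj \<pi> K T h s)"
  shows "0 \<le> mismatch_count \<theta> i \<tau>" "mismatch_count \<theta> i \<tau> \<le> real T"
proof -
  have w: "0 \<le> (if fst (\<tau>!u) then 0 else mismatch \<theta> (snd (\<tau>!u)) i)
           \<and> (if fst (\<tau>!u) then 0 else mismatch \<theta> (snd (\<tau>!u)) i) \<le> 1" if "u \<in> {..<T}" for u
    using that set_pmf_traj_D[OF v \<tau>] mismatch_01[OF _ i, of "snd (\<tau>!u)" \<theta>] by auto
  show "0 \<le> mismatch_count \<theta> i \<tau>" unfolding mismatch_count_def using w by (intro sum_nonneg) blast
  have "mismatch_count \<theta> i \<tau> \<le> (\<Sum>u<T. 1)" unfolding mismatch_count_def using w by (intro sum_mono) blast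
  then show "mismatch_count \<theta> i \<tau> \<le> real T" by simp
qed

lemma expected_likelihood_ratio_flip_le:
  assumes v: "valid_policy d \<pi>" and \<theta>: "\<theta> \<in> Theta d \<gamma> T" and i: "i < d - 1"
  shows "E (traj \<pi> (trans_M d \<gamma> T (flip_coord i \<theta>)) T [] False)
           (likelihood_ratio (trans_M d \<gamma> T \<theta>) (trans_M d \<gamma> T (flip_coord i \<theta>))) \<le> 17/16"
proof -
  have "E (traj \<pi> (trans_M d \<gamma> T (flip_coord i \<theta>)) T [] False)
          (likelihood_ratio (trans_M d \<gamma> T \<theta>) (trans_M d \<gamma> T (flip_coord i \<theta>)))
        \<le> (1 + 1 / (17 * real T)) ^ T"
    using T_pos chi_square_flip_le[OF \<theta> i]
    by (intro expectation_likelihood_ratio_le_power[OF v pmf_trans_pos]) auto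
  then show ?thesis using one_plus_inverse_power_le by simp
qed

lemma expected_time_in_x0_ge:
  assumes v: "valid_policy d \<pi>" and \<theta>: "\<theta> \<in> Theta d \<gamma> T"
  shows "(9/20) * real T \<le> E (traj \<pi> (trans_M d \<gamma> T \<theta>) T [] False) time_in_x0"
proof -
  have "(9/20) * real T - (if False then (9/20) / \<delta> else 0)
        \<le> disc_return \<pi> (trans_M d \<gamma> T \<theta>) 1 (\<lambda>s a. if s then 0 else 1) T [] False"
  proof (rule disc_return_visits_x0_ge[OF v])
    show "pmf (trans_M d \<gamma> T \<theta> False a) True \<le> p_max" if "a \<in> actions d" for a
      unfolding pmf_trans_x0_x1 by (rule p01_inner_act_bounds(2)[OF \<theta> that])
    show "\<delta> \<le> pmf (trans_M d \<gamma> T \<theta> True a) False" for a by (simp add: pmf_trans_x1_x0)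
    have "p_max * ((9/20) / \<delta>) \<le> ((151/150) * \<delta>) * ((9/20) / \<delta>)"
      using p_max_le delta_pos by (intro mult_right_mono) auto
    then show "p_max * ((9/20) / \<delta>) \<le> 1 - 9/20" using delta_pos by simp
  qed (use delta_pos in auto)
  then show ?thesis by (simp add: disc_return_def time_in_x0_def[abs_def])
qed

text \<open>The laws of the trajectories under \<open>\<theta>\<close> and under \<open>\<theta>\<close> with coordinate \<open>i\<close> flipped are
  so close that the policy cannot play the sign of \<open>\<theta>\<^sub>i\<close> correctly in both instances:
  the two mismatch counts add up to almost the time spent in \<open>x\<^sub>0\<close>, which is at least
  \<open>9 T / 20\<close>.\<close>
lemma mismatch_counts_flip_ge:
  assumes v: "valid_policy d \<pi>" and \<theta>: "\<theta> \<in> Theta d \<gamma> T" and i: "i < d - 1"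
  shows "real T / 5 \<le> E (traj \<pi> (trans_M d \<gamma> T \<theta>) T [] False) (mismatch_count \<theta> i)
          + E (traj \<pi> (trans_M d \<gamma> T (flip_coord i \<theta>)) T [] False) (mismatch_count (flip_coord i \<theta>) i)"
proof -
  let ?K = "trans_M d \<gamma> T \<theta>" and ?K' = "trans_M d \<gamma> T (flip_coord i \<theta>)"
  let ?P = "traj \<pi> ?K T [] False" and ?Q = "traj \<pi> ?K' T [] False"
  let ?H = "mismatch_count (flip_coord i \<theta>) i"
  have "\<bar>?H \<tau>\<bar> \<le> real T" if "\<tau> \<in> set_pmf ?P" for \<tau>
    using mismatch_count_bounds[OF v i that] by simp
  then have "E ?P ?H - E ?Q ?H
      \<le> (1 / (4 * real T) * (real T)\<^sup>2 + (E ?Q (likelihood_ratio ?K ?K') - 1) / (1 / (4 * real T))) / 2"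
    using T_pos by (intro expectation_traj_diff_le[OF v pmf_trans_pos]) auto
  also have "\<dots> = real T / 8 + 2 * real T * (E ?Q (likelihood_ratio ?K ?K') - 1)"
    using T_pos by (simp add: power2_eq_square field_simps)
  also have "\<dots> \<le> real T / 8 + 2 * real T * (1/16)"
    using expected_likelihood_ratio_flip_le[OF v \<theta> i] T_pos by (intro add_left_mono mult_left_mono) auto
  finally have "E ?P ?H - E ?Q ?H \<le> real T / 4" by simp
  moreover have "E ?P (mismatch_count \<theta> i) + E ?P ?H = E ?P time_in_x0"
    unfolding mismatch_count_flip_coord[OF \<theta> i]
    by (simp add: Bochner_Integration.integral_diff integrable_traj[OF v])
  ultimately show ?thesis using expected_time_in_x0_ge[OF v \<theta>] by linarith
qed

section \<open>Averaging over the hypercube\<close>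

lemma finite_Theta: "finite (Theta d \<gamma> T)"
proof -
  let ?c = "Deltabar d \<gamma> T / (real d - 1)"
  let ?ext = "\<lambda>f i. if i < d - 1 then f i else 0"
  have "Theta d \<gamma> T \<subseteq> ?ext ` (PiE {..<d-1} (\<lambda>_. {- ?c, ?c}))"
  proof
    fix \<theta> assume \<theta>: "\<theta> \<in> Theta d \<gamma> T"
    show "\<theta> \<in> ?ext ` (PiE {..<d-1} (\<lambda>_. {- ?c, ?c}))"
    proof
      show "restrict \<theta> {..<d-1} \<in> PiE {..<d-1} (\<lambda>_. {- ?c, ?c})"
        using \<theta> by (auto simp: Theta_def)
      show "\<theta> = ?ext (restrict \<theta> {..<d-1})"
        using \<theta> by (auto simp: Theta_def fun_eq_iff)
    qed
  qed
  then show ?thesis by (rule finite_subset) (intro finite_imageI finite_PiE, auto)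
qed

lemma Theta_nonempty: "Theta d \<gamma> T \<noteq> {}"
proof -
  have "(\<lambda>i. if i < d - 1 then Deltabar d \<gamma> T / (real d - 1) else 0) \<in> Theta d \<gamma> T"
    by (simp add: Theta_def)
  then show ?thesis by blast
qed

lemma sum_mismatch_counts_ge:
  assumes v: "valid_policy d \<pi>" and i: "i < d - 1"
  shows "real (card (Theta d \<gamma> T)) * (real T / 10)
         \<le> (\<Sum>\<theta>\<in>Theta d \<gamma> T. E (traj \<pi> (trans_M d \<gamma> T \<theta>) T [] False) (mismatch_count \<theta> i))"
proof -
  let ?F = "\<lambda>\<theta>. E (traj \<pi> (trans_M d \<gamma> T \<theta>) T [] False) (mismatch_count \<theta> i)"
  have "(\<Sum>\<theta>\<in>Theta d \<gamma> T. real T / 5) \<le> (\<Sum>\<theta>\<in>Theta d \<gamma> T. ?F \<theta> + ?F (flip_coord i \<theta>))"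
    by (intro sum_mono mismatch_counts_flip_ge[OF v _ i])
  also have "\<dots> = 2 * (\<Sum>\<theta>\<in>Theta d \<gamma> T. ?F \<theta>)"
    using sum.reindex_bij_betw[OF bij_betw_flip_coord[OF i], of ?F] by (simp add: sum.distrib)
  finally show ?thesis by simp
qed

definition "regret_lower = gap_rate / \<delta> * ((real d - 1) * (real T / 10)) - \<gamma> / \<delta>\<^sup>2"

lemma exists_Theta_expected_regret_ge:
  assumes v: "valid_policy d \<pi>"
  shows "\<exists>\<theta>\<in>Theta d \<gamma> T. regret_lower \<le> expected_regret d (trans_M d \<gamma> T \<theta>) \<gamma> \<pi> False T"
proof (rule exists_ge_of_sum_ge[OF finite_Theta Theta_nonempty])
  let ?N = "real (card (Theta d \<gamma> T))"
  let ?M = "\<lambda>\<theta>. \<Sum>i<d-1. E (traj \<pi> (trans_M d \<gamma> T \<theta>) T [] False) (mismatch_count \<theta> i)"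
  have "?N * ((real d - 1) * (real T / 10)) = (\<Sum>i<d-1. ?N * (real T / 10))"
    using d_ge_2 by (simp add: of_nat_diff)
  also have "\<dots> \<le> (\<Sum>i<d-1. \<Sum>\<theta>\<in>Theta d \<gamma> T. E (traj \<pi> (trans_M d \<gamma> T \<theta>) T [] False) (mismatch_count \<theta> i))"
    by (intro sum_mono sum_mismatch_counts_ge[OF v]) auto
  also have "\<dots> = (\<Sum>\<theta>\<in>Theta d \<gamma> T. ?M \<theta>)"
    by (rule sum.swap)
  finally have M: "?N * ((real d - 1) * (real T / 10)) \<le> (\<Sum>\<theta>\<in>Theta d \<gamma> T. ?M \<theta>)" .
  have "?N * regret_lower = gap_rate / \<delta> * (?N * ((real d - 1) * (real T / 10))) - ?N * (\<gamma> / \<delta>\<^sup>2)"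
    by (simp add: regret_lower_def algebra_simps)
  also have "\<dots> \<le> gap_rate / \<delta> * (\<Sum>\<theta>\<in>Theta d \<gamma> T. ?M \<theta>) - ?N * (\<gamma> / \<delta>\<^sup>2)"
    using M gap_rate_nonneg delta_pos by (intro diff_right_mono mult_left_mono) auto
  also have "\<dots> = (\<Sum>\<theta>\<in>Theta d \<gamma> T. gap_rate / \<delta> * ?M \<theta> - \<gamma> / \<delta>\<^sup>2)"
    by (simp add: sum_subtractf sum_distrib_left)
  also have "\<dots> \<le> (\<Sum>\<theta>\<in>Theta d \<gamma> T. expected_regret d (trans_M d \<gamma> T \<theta>) \<gamma> \<pi> False T)"
    by (intro sum_mono expected_regret_ge[OF _ v])
  finally show "?N * regret_lower \<le> (\<Sum>\<theta>\<in>Theta d \<gamma> T. expected_regret d (trans_M d \<gamma> T \<theta>) \<gamma> \<pi> False T)" .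
qed

lemma Vgap_ge: "Vgap \<ge> 150 / (451 * \<delta>)"
proof -
  have "1 - \<gamma>\<^sup>2 = \<delta> * (1 + \<gamma>)" by (simp add: \<delta>_def power2_eq_square algebra_simps)
  also have "\<dots> \<le> \<delta> * 2" using delta_pos \<gamma>_less_1 by (intro mult_left_mono) auto
  finally have "1 - \<gamma>\<^sup>2 \<le> 2 * \<delta>" by simp
  moreover have "\<gamma> * p_max \<le> 1 * p_max" using \<gamma>_less_1 p_max_pos by (intro mult_right_mono) auto
  then have "\<gamma> * p_max \<le> (151/150) * \<delta>" using p_max_le by simp
  ultimately have "1 - \<gamma>\<^sup>2 + \<gamma> * p_max \<le> (451/150) * \<delta>" by simp
  then have "1 / ((451/150) * \<delta>) \<le> 1 / (1 - \<gamma>\<^sup>2 + \<gamma> * p_max)"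
    using Vgap_denom_pos by (intro divide_left_mono) auto
  then show ?thesis by (simp add: Vgap_def)
qed

lemma Deltabar_ge_Delta_over_delta: "\<Delta>bar \<ge> (150/151) * (\<Delta> / \<delta>)"
proof -
  have "\<Delta> / ((151/150) * \<delta>) \<le> \<Delta> / (\<delta> + \<Delta>)"
    using Delta_pos delta_pos Delta_le_delta by (intro divide_left_mono) auto
  then show ?thesis using Deltabar_ge by simp
qed

lemma gap_rate_term_ge: "gap_rate / \<delta> * ((real d - 1) * (real T / 10)) \<ge> \<gamma> * (\<Delta> * real T) / (20 * \<delta>\<^sup>2)"
proof -
  have "Vgap * (1 - p_max) * \<Delta>bar \<ge> (150 / (451 * \<delta>)) * (49/50) * ((150/151) * (\<Delta> / \<delta>))"
    using Vgap_ge Deltabar_ge_Delta_over_delta p_max_le_1_50 delta_pos Delta_pos Vgap_pos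
    by (intro mult_mono) auto
  then have "\<gamma> * real T * (9/50) * ((150 / (451 * \<delta>)) * (49/50) * ((150/151) * (\<Delta> / \<delta>)))
             \<le> \<gamma> * real T * (9/50) * (Vgap * (1 - p_max) * \<Delta>bar)"
    using \<gamma>_ge T_pos by (intro mult_left_mono) auto
  moreover have "\<gamma> * (\<Delta> * real T) / (20 * \<delta>\<^sup>2)
      \<le> \<gamma> * real T * (9/50) * ((150 / (451 * \<delta>)) * (49/50) * ((150/151) * (\<Delta> / \<delta>)))"
    using \<gamma>_ge Delta_pos T_pos delta_pos by (simp add: power2_eq_square field_simps)
  moreover have "gap_rate / \<delta> * ((real d - 1) * (real T / 10))
      = \<gamma> * real T * (9/50) * (Vgap * (1 - p_max) * \<Delta>bar)"
    unfolding gap_rate_def \<eta>_def using d_minus_1_ge delta_pos by (simp add: field_simps)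
  ultimately show ?thesis by linarith
qed

lemma Delta_T_ge: "\<Delta> * real T \<ge> (real d - 1) * sqrt (real T) * sqrt \<delta> / 29"
proof -
  define st where "st = sqrt (real T)"
  define sd where "sd = sqrt \<delta>"
  have st: "st > 0" "st\<^sup>2 = real T" using T_pos by (auto simp: st_def)
  have sd: "sd > 0" "sd\<^sup>2 = \<delta>" using delta_pos by (auto simp: sd_def)
  have "(2/5) * (real T / \<delta>) * ln 2 \<le> (2/5) * (real T / \<delta>) * 1"
    using ln_2_less_1 T_pos delta_pos by (intro mult_left_mono) auto
  also have "\<dots> \<le> (29/45)\<^sup>2 * (real T / \<delta>)"
    using T_pos delta_pos mult_right_mono[of "2/5" "(29/45)\<^sup>2" "real T / \<delta>"]
    by (simp add: power2_eq_square)
  finally have "(2/5) * (real T / \<delta>) * ln 2 \<le> (29/45)\<^sup>2 * (real T / \<delta>)" .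
  then have "\<sigma> \<le> sqrt ((29/45)\<^sup>2 * (real T / \<delta>))"
    unfolding \<sigma>_def \<delta>_def[symmetric] by simp
  also have "\<dots> = (29/45) * (st / sd)"
    unfolding st_def sd_def using T_pos delta_pos by (simp add: real_sqrt_mult real_sqrt_divide)
  finally have "(real d - 1) / (45 * ((29/45) * (st / sd))) \<le> \<Delta>"
    unfolding Delta_eq using sigma_pos d_minus_1_ge st sd by (intro divide_left_mono mult_left_mono) auto
  then have "(real d - 1) * sd / (29 * st) * st\<^sup>2 \<le> \<Delta> * st\<^sup>2"
    using st sd by (intro mult_right_mono) (auto simp: field_simps)
  moreover have "(real d - 1) * sd / (29 * st) * st\<^sup>2 = (real d - 1) * st * sd / 29"
    using st(1) by (simp add: power2_eq_square field_simps)
  ultimately have "(real d - 1) * st * sd / 29 \<le> \<Delta> * st\<^sup>2" by linarith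
  then show ?thesis unfolding st(2) unfolding st_def sd_def .
qed

lemma regret_lower_ge:
  "\<gamma> / (3375 * (1 - \<gamma>) powr (3/2)) * real d * sqrt (real T) - \<gamma> / (1 - \<gamma>)\<^sup>2 \<le> regret_lower"
proof -
  define st where "st = sqrt (real T)"
  define sd where "sd = sqrt \<delta>"
  have st: "st > 0" using T_pos by (auto simp: st_def)
  have sd: "sd > 0" "sd\<^sup>2 = \<delta>" using delta_pos by (auto simp: sd_def)
  have "\<delta> powr (3/2) = \<delta> powr (1 + 1/2)" by simp
  also have "\<dots> = \<delta> * \<delta> powr (1/2)" using delta_pos by (simp only: powr_add) simp
  also have "\<dots> = sd ^ 3" using delta_pos sd by (simp add: powr_half_sqrt sd_def power3_eq_cube)
  finally have pw: "(1 - \<gamma>) powr (3/2) = sd ^ 3" by (simp add: \<delta>_def)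
  have dl4: "\<delta>\<^sup>2 = sd ^ 4" using sd by (simp flip: sd(2) add: power2_eq_square power4_eq_xxxx)
  have "(real d - 1) / 580 * (\<gamma> * st / sd ^ 3) = \<gamma> * ((real d - 1) * st * sd / 29) / (20 * \<delta>\<^sup>2)"
    unfolding dl4 using sd by (simp add: field_simps power4_eq_xxxx power3_eq_cube)
  also have "\<dots> \<le> \<gamma> * (\<Delta> * real T) / (20 * \<delta>\<^sup>2)"
    using Delta_T_ge \<gamma>_ge delta_pos unfolding st_def sd_def by (intro divide_right_mono mult_left_mono) auto
  finally have a: "(real d - 1) / 580 * (\<gamma> * st / sd ^ 3) \<le> gap_rate / \<delta> * ((real d - 1) * (real T / 10))"
    using gap_rate_term_ge by linarith
  have "real d / 3375 * (\<gamma> * st / sd ^ 3) \<le> (real d - 1) / 580 * (\<gamma> * st / sd ^ 3)"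
    using d_ge_2 \<gamma>_ge st sd by (intro mult_right_mono) auto
  moreover have "\<gamma> / (3375 * (1 - \<gamma>) powr (3/2)) * real d * sqrt (real T) = real d / 3375 * (\<gamma> * st / sd ^ 3)"
    unfolding pw st_def by simp
  ultimately show ?thesis using a unfolding regret_lower_def \<delta>_def by linarith
qed

section \<open>Norms of the parameters and features\<close>

lemma alpha_squared: "(alpha d \<gamma> T)\<^sup>2 = \<Delta>bar / ((real d - 1) * (1 + \<Delta>bar))"
  unfolding alpha_def \<Delta>bar_def[symmetric] using Deltabar_pos d_minus_1_ge by simp

lemma beta_squared: "(beta d \<gamma> T)\<^sup>2 = 1 / (1 + \<Delta>bar)"
  unfolding beta_def \<Delta>bar_def[symmetric] using Deltabar_pos by simp

lemma Ltheta_eq: assumes \<theta>: "\<theta> \<in> Theta d \<gamma> T" shows "Ltheta d \<gamma> T \<theta> = 1 + \<Delta>bar"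
proof -
  let ?a = "alpha d \<gamma> T" and ?b = "beta d \<gamma> T"
  have "(thetabar d \<gamma> T \<theta> i)\<^sup>2 = \<eta>\<^sup>2 / ?a\<^sup>2" if "i \<in> {..<d-1}" for i
  proof -
    have "(opt_sign \<theta> i)\<^sup>2 = 1" by (simp add: opt_sign_def)
    then show ?thesis
      using that Theta_coord[OF \<theta>] by (simp add: thetabar_def power_divide power_mult_distrib)
  qed
  then have "(\<Sum>i<d-1. (thetabar d \<gamma> T \<theta> i)\<^sup>2) = (\<Sum>i<d-1. \<eta>\<^sup>2 / ?a\<^sup>2)"
    by (rule sum.cong[OF refl])
  then have "(\<Sum>i<d. (thetabar d \<gamma> T \<theta> i)\<^sup>2) = (real d - 1) * (\<eta>\<^sup>2 / ?a\<^sup>2) + 1 / ?b\<^sup>2"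
    unfolding sum_lessThan_d using d_ge_2 by (simp add: thetabar_def power_divide of_nat_diff)
  also have "\<dots> = \<Delta>bar * (1 + \<Delta>bar) + (1 + \<Delta>bar)"
  proof -
    define m where "m = real d - 1"
    have "m > 0" using d_minus_1_ge by (simp add: m_def)
    then show ?thesis unfolding alpha_squared beta_squared \<eta>_def m_def[symmetric]
      using Deltabar_pos by (simp add: power2_eq_square field_simps)
  qed
  also have "\<dots> = (1 + \<Delta>bar)\<^sup>2" by (simp add: power2_eq_square algebra_simps)
  finally show ?thesis unfolding Ltheta_def vnorm_def using Deltabar_pos by simp
qed

lemma log_odds_nonneg: "0 \<le> log_odds"
proof -
  have "1 \<le> \<gamma> / \<delta>" using \<gamma>_ge delta_le delta_pos by (simp add: le_divide_eq)
  then show ?thesis using exp_log_odds one_le_exp_iff[of log_odds] by simp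
qed

lemma sum_squares_phi_le:
  assumes a: "a \<in> actions d"
  shows "(\<Sum>i<d. (phi d \<gamma> T s a s' i)\<^sup>2) \<le> (\<Delta>bar + log_odds\<^sup>2) / (1 + \<Delta>bar)"
proof -
  have last: "(beta d \<gamma> T * log_odds)\<^sup>2 = log_odds\<^sup>2 / (1 + \<Delta>bar)"
    by (simp add: power_mult_distrib beta_squared)
  have nonneg: "0 \<le> (\<Delta>bar + log_odds\<^sup>2) / (1 + \<Delta>bar)" using Deltabar_pos by simp
  show ?thesis
  proof (cases s; cases s')
    assume "s" "s'"
    then have "(\<Sum>i<d. (phi d \<gamma> T s a s' i)\<^sup>2) = log_odds\<^sup>2 / (1 + \<Delta>bar)"
      unfolding sum_lessThan_d last[symmetric] by (simp add: phi_def log_odds_def Let_def)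
    then show ?thesis using Deltabar_pos by (simp add: divide_right_mono)
  next
    assume "\<not> s" "\<not> s'"
    have "(phi d \<gamma> T s a s' i)\<^sup>2 = (alpha d \<gamma> T)\<^sup>2" if "i \<in> {..<d-1}" for i
      using a that \<open>\<not> s\<close> \<open>\<not> s'\<close> by (auto simp: actions_def phi_def power_mult_distrib)
    then have "(\<Sum>i<d. (phi d \<gamma> T s a s' i)\<^sup>2) = (real d - 1) * (alpha d \<gamma> T)\<^sup>2 + log_odds\<^sup>2 / (1 + \<Delta>bar)"
      unfolding sum_lessThan_d last[symmetric] using \<open>\<not> s\<close> \<open>\<not> s'\<close> d_ge_2
      by (simp add: phi_def log_odds_def Let_def of_nat_diff)
    also have "\<dots> = (\<Delta>bar + log_odds\<^sup>2) / (1 + \<Delta>bar)"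
      unfolding alpha_squared using d_minus_1_ge by (simp add: add_divide_distrib)
    finally show ?thesis by simp
  qed (use nonneg in \<open>simp_all add: phi_def\<close>)
qed

lemma vnorm_phi_le: "a \<in> actions d \<Longrightarrow> vnorm d (phi d \<gamma> T s a s') \<le> 1 + log_odds"
proof (rule vnorm_le)
  assume a: "a \<in> actions d"
  have "0 \<le> (\<Delta>bar + log_odds\<^sup>2) * \<Delta>bar" using Deltabar_pos by simp
  then have "(\<Delta>bar + log_odds\<^sup>2) / (1 + \<Delta>bar) \<le> \<Delta>bar + log_odds\<^sup>2"
    using Deltabar_pos by (simp add: divide_le_eq algebra_simps)
  also have "\<dots> \<le> (1 + log_odds)\<^sup>2"
    using Deltabar_le_1_99 log_odds_nonneg by (simp add: power2_eq_square algebra_simps)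
  finally show "(\<Sum>i<d. (phi d \<gamma> T s a s' i)\<^sup>2) \<le> (1 + log_odds)\<^sup>2"
    using sum_squares_phi_le[OF a, of s s'] by linarith
  show "0 \<le> 1 + log_odds" using log_odds_nonneg by simp
qed

lemma Lphi_le: "Lphi d \<gamma> T \<le> 1 + ln (\<gamma> / (1 - \<gamma>))"
proof -
  let ?S = "(\<lambda>(s, a, s'). vnorm d (phi d \<gamma> T s a s')) ` (UNIV \<times> actions d \<times> UNIV)"
  have "ln (\<gamma> / (1 - \<gamma>)) = log_odds"
    using \<gamma>_less_1 by (simp add: log_odds_def field_simps)
  moreover have "finite ?S" using finite_actions by simp
  moreover have "?S \<noteq> {}" using opt_action_in_actions by blast
  moreover have "\<forall>x\<in>?S. x \<le> 1 + log_odds" using vnorm_phi_le by auto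
  ultimately show ?thesis unfolding Lphi_def by simp
qed

end

theorem theorem10:
  fixes d T :: nat and \<gamma> :: real and \<pi> :: policy
  assumes "d \<ge> 2" and "\<gamma> \<ge> 100/101" and "\<gamma> < 1"
    and "real T \<ge> 45 * (real d - 1)\<^sup>2 / (1 - \<gamma>)"
    and "valid_policy d \<pi>"
  shows "\<exists>\<theta>\<in>Theta d \<gamma> T.
           Ltheta d \<gamma> T \<theta> \<le> 100/99
         \<and> Lphi d \<gamma> T \<le> 1 + ln (\<gamma> / (1 - \<gamma>))
         \<and> expected_regret d (trans_M d \<gamma> T \<theta>) \<gamma> \<pi> False T
             \<ge> \<gamma> / (3375 * (1 - \<gamma>) powr (3/2)) * real d * sqrt (real T) - \<gamma> / (1 - \<gamma>)\<^sup>2"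
proof -
  interpret hard_instance d T \<gamma> using assms(1-4) by unfold_locales
  obtain \<theta> where \<theta>: "\<theta> \<in> Theta d \<gamma> T"
    and regret: "regret_lower \<le> expected_regret d (trans_M d \<gamma> T \<theta>) \<gamma> \<pi> False T"
    using exists_Theta_expected_regret_ge[OF assms(5)] by blast
  have "Ltheta d \<gamma> T \<theta> \<le> 100/99" using Ltheta_eq[OF \<theta>] Deltabar_le_1_99 by simp
  with \<theta> regret regret_lower_ge Lphi_le show ?thesis by force
qed

end
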